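(* Given a c.e. transitive relation $\prec$ on $\omega$ and a c.e. set $U\subseteq\omega$, one can effectively obtain (uniformly in indices for $\prec$ and $U$) a c.e. transitive relation $\sqsubset$ on $\omega$ such that $\mathcal{I}(\sqsubset)$ is computably homeomorphic to the effective space obtained from $\mathcal{I}(\prec)$ by adding the set $A=\{I\in\mathcal{I}(\prec)\mid (\forall x\in U)\, x\notin I\}$ as a c.e. open set to its topology.
   Context: For a transitive relation $\prec$ on $\omega$, an ideal is a non-empty set $I\subseteq\omega$ which is a lower set ($b\prec a\in I\Rightarrow b\in I$) and directed (for $a,b\in I$ there is $c\in I$ with $a\prec c$, $b\prec c$). $\mathcal{I}(\prec)$ is the space of all ideals with topology generated by $[n]_\prec=\{I\mid n\in I\}$, an effective space with base numbering $n\mapsto[n]_\prec$. Adding $A$ as a c.e. open set means taking the topology generated by the sets $[n]_\prec$ together with $A$, with the effective base consisting of the sets $[n]_\prec$ and $A\cap[n]_\prec$. Effective spaces are countably based $T_0$ spaces with a numbered base whose pairwise intersections are uniformly c.e. unions of basic sets; a map is computable if preimages of basic open sets are uniformly c.e. unions of basic open sets, and a computable homeomorphism is a homeomorphism computable in both directions. *)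

theory Defs
  imports Main "HOL-Library.Nat_Bijection"
begin

datatype recf = Z | S | Proj nat | Cn recf "recf list" | Pr recf recf | Mn recf

inductive eval :: "recf \<Rightarrow> nat list \<Rightarrow> nat \<Rightarrow> bool" where
  eval_Z: "eval Z xs 0"
| eval_S: "eval S (x # xs) (Suc x)"
| eval_Proj: "i < length xs \<Longrightarrow> eval (Proj i) xs (xs ! i)"
| eval_Cn: "list_all2 (\<lambda>g y. eval g xs y) gs ys \<Longrightarrow> eval f ys z \<Longrightarrow> eval (Cn f gs) xs z"
| eval_Pr0: "eval f xs y \<Longrightarrow> eval (Pr f g) (0 # xs) y"
| eval_PrS: "eval (Pr f g) (n # xs) y \<Longrightarrow> eval g (n # y # xs) z \<Longrightarrow> eval (Pr f g) (Suc n # xs) z"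
| eval_Mn: "eval f (n # xs) 0 \<Longrightarrow> (\<forall>m<n. \<exists>y. eval f (m # xs) (Suc y)) \<Longrightarrow> eval (Mn f) xs n"
monos list_all2_mono

fun code :: "recf \<Rightarrow> nat" where
  "code Z = prod_encode (0, 0)"
| "code S = prod_encode (1, 0)"
| "code (Proj i) = prod_encode (2, i)"
| "code (Cn f gs) = prod_encode (3, prod_encode (code f, list_encode (map code gs)))"
| "code (Pr f g) = prod_encode (4, prod_encode (code f, code g))"
| "code (Mn f) = prod_encode (5, code f)"

text \<open>The e-th c.e. set (domain of the e-th partial recursive function; empty if e
  is not a code).\<close>
definition W :: "nat \<Rightarrow> nat set" where
  "W e = {x. \<exists>f. code f = e \<and> (\<exists>y. eval f [x] y)}"

definition ce :: "nat set \<Rightarrow> bool" where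
  "ce A \<longleftrightarrow> (\<exists>e. A = W e)"

definition total_computable :: "(nat \<Rightarrow> nat) \<Rightarrow> bool" where
  "total_computable h \<longleftrightarrow> (\<exists>f. \<forall>n. eval f [n] (h n))"

definition ce_rel :: "nat \<Rightarrow> nat \<Rightarrow> nat \<Rightarrow> bool" where
  "ce_rel e a b \<longleftrightarrow> prod_encode (a, b) \<in> W e"

definition trans_rel :: "(nat \<Rightarrow> nat \<Rightarrow> bool) \<Rightarrow> bool" where
  "trans_rel R \<longleftrightarrow> (\<forall>a b c. R a b \<longrightarrow> R b c \<longrightarrow> R a c)"

definition is_ideal :: "(nat \<Rightarrow> nat \<Rightarrow> bool) \<Rightarrow> nat set \<Rightarrow> bool" where
  "is_ideal R I \<longleftrightarrow> I \<noteq> {} \<and> (\<forall>a\<in>I. \<forall>b. R b a \<longrightarrow> b \<in> I)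
     \<and> (\<forall>a\<in>I. \<forall>b\<in>I. \<exists>c\<in>I. R a c \<and> R b c)"

definition Ideals :: "(nat \<Rightarrow> nat \<Rightarrow> bool) \<Rightarrow> nat set set" where
  "Ideals R = {I. is_ideal R I}"

definition ideal_base :: "(nat \<Rightarrow> nat \<Rightarrow> bool) \<Rightarrow> nat \<Rightarrow> nat set set" where
  "ideal_base R n = {I \<in> Ideals R. n \<in> I}"

definition avoid_set :: "(nat \<Rightarrow> nat \<Rightarrow> bool) \<Rightarrow> nat set \<Rightarrow> nat set set" where
  "avoid_set R U = {I \<in> Ideals R. \<forall>x\<in>U. x \<notin> I}"

text \<open>Base numbering of the space obtained from I(R) by adding A as a c.e. open set:
  basic sets [n]_R (even indices 2n) and A \<inter> [n]_R (odd indices 2n+1).\<close>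
definition added_base :: "(nat \<Rightarrow> nat \<Rightarrow> bool) \<Rightarrow> nat set set \<Rightarrow> nat \<Rightarrow> nat set set" where
  "added_base R A n = (if even n then ideal_base R (n div 2) else A \<inter> ideal_base R (n div 2))"

definition computable_map ::
  "'a set \<Rightarrow> (nat \<Rightarrow> 'a set) \<Rightarrow> 'b set \<Rightarrow> (nat \<Rightarrow> 'b set) \<Rightarrow> ('a \<Rightarrow> 'b) \<Rightarrow> bool" where
  "computable_map X BX Y BY f \<longleftrightarrow> f ` X \<subseteq> Y \<and>
     (\<exists>V. ce V \<and> (\<forall>n. {x \<in> X. f x \<in> BY n} = \<Union>{BX m | m. prod_encode (n, m) \<in> V}))"

definition computably_homeomorphic ::
  "'a set \<Rightarrow> (nat \<Rightarrow> 'a set) \<Rightarrow> 'b set \<Rightarrow> (nat \<Rightarrow> 'b set) \<Rightarrow> bool" where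
  "computably_homeomorphic X BX Y BY \<longleftrightarrow> (\<exists>f g.
     computable_map X BX Y BY f \<and> computable_map Y BY X BX g \<and>
     (\<forall>x\<in>X. g (f x) = x) \<and> (\<forall>y\<in>Y. f (g y) = y))"

end

theory Submission
  imports Defs
begin

text \<open>
  The new relation lives on codes of two kinds of elements. An avoiding element
  \<open>\<langle>0, n, s, K\<rangle>\<close> consists of a node \<open>n\<close>, a stage \<open>s\<close> and a finite set \<open>K\<close> of
  predecessors of \<open>n\<close> that is closed under the part of \<open>\<prec>\<close> enumerated by stage \<open>s\<close> and
  meets no element of \<open>U\<close> enumerated by stage \<open>s\<close>; these are ordered by increasing
  stage and growing support. A meeting element \<open>\<langle>1, n, x\<rangle>\<close> carries a witness
  \<open>x \<in> U\<close> below its node \<open>n\<close>; these are ordered by \<open>\<prec>\<close> on the nodes.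
  Every ideal of the new relation consists of elements of one kind. The ideal generated by
  the nodes of an ideal of avoiding elements lies in \<open>A\<close>: if \<open>x \<in> U\<close> and \<open>x \<prec> n\<close> for a
  node \<open>n\<close>, both facts are enumerated by some stage, and from then on closedness forces
  \<open>x\<close> into supports, which must avoid \<open>U\<close>. Ideals of meeting elements give exactly the
  ideals outside \<open>A\<close>. Taking the ideal generated by the nodes is the computable
  homeomorphism; its inverse lifts an ideal to all elements over it.

  All relations and sets involved are c.e. uniformly in the indices because membership in
  \<open>W e\<close> has a decidable stage-wise approximation: \<open>x \<in> W e\<close> iff some finite certificate,
  a list of claims about programs each justified by earlier ones, records a halting
  computation of program \<open>e\<close> on input \<open>x\<close>.
\<close>

section \<open>Computable functions and decidable predicates\<close>

lemma eval_deterministic: "eval f xs y \<Longrightarrow> eval f xs y' \<Longrightarrow> y = y'"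
proof (induction arbitrary: y' rule: eval.induct)
  case (eval_Cn xs gs ys f z)
  from eval_Cn.prems obtain ys' where ys': "list_all2 (\<lambda>g y. eval g xs y) gs ys'" and "eval f ys' y'"
    by (cases rule: eval.cases) auto
  moreover have "ys = ys'"
    using eval_Cn.IH(1) ys' by (auto simp: list_all2_conv_all_nth intro!: nth_equalityI)
  ultimately show ?case
    using eval_Cn.IH(2) by simp
next
  case (eval_Mn f n xs)
  from eval_Mn.prems obtain n' where n': "eval f (n' # xs) 0" "\<forall>m<n'. \<exists>y. eval f (m # xs) (Suc y)"
    and "y' = n'"
    by (cases rule: eval.cases) auto
  have "\<not> n < n'"
    using n' eval_Mn.IH(1) by fastforce
  moreover have "\<not> n' < n"
    using n' eval_Mn.IH(2) by fastforce
  ultimately show ?case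
    using \<open>y' = n'\<close> by simp
next
  case (eval_Pr0 f xs y g)
  from eval_Pr0.prems show ?case
    by (cases rule: eval.cases) (use eval_Pr0.IH in auto)
next
  case (eval_PrS f g n xs y z)
  from eval_PrS.prems show ?case
    by (cases rule: eval.cases) (use eval_PrS.IH in auto)
qed (auto elim: eval.cases)

lemma list_all2_choice: "\<forall>x\<in>set xs. \<exists>y. P y x \<Longrightarrow> \<exists>ys. list_all2 P ys xs"
  by (induction xs) (auto simp: list_all2_Cons2)

definition computable :: "nat \<Rightarrow> (nat list \<Rightarrow> nat) \<Rightarrow> bool" where
  "computable k F \<longleftrightarrow> (\<exists>f. \<forall>xs. length xs = k \<longrightarrow> eval f xs (F xs))"

definition decidable :: "nat \<Rightarrow> (nat list \<Rightarrow> bool) \<Rightarrow> bool" where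
  "decidable k P \<longleftrightarrow> computable k (\<lambda>xs. of_bool (P xs))"

named_theorems computable_intros

lemma computable_cong:
  "computable k F \<Longrightarrow> (\<And>xs. length xs = k \<Longrightarrow> F xs = G xs) \<Longrightarrow> computable k G"
  unfolding computable_def by metis

lemma decidable_cong:
  "decidable k P \<Longrightarrow> (\<And>xs. length xs = k \<Longrightarrow> P xs = Q xs) \<Longrightarrow> decidable k Q"
  unfolding decidable_def by (erule computable_cong) simp

lemma computable_zero: "computable k (\<lambda>xs. 0)"
  unfolding computable_def by (auto intro: eval_Z)

lemma computable_nth [computable_intros]: "i < k \<Longrightarrow> computable k (\<lambda>xs. xs ! i)"
  unfolding computable_def by (auto intro: eval_Proj)

lemma computable_Suc_hd: "0 < k \<Longrightarrow> computable k (\<lambda>xs. Suc (xs ! 0))"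
  unfolding computable_def
proof (intro exI allI impI)
  fix xs :: "nat list"
  assume "0 < k" "length xs = k"
  then obtain x ys where "xs = x # ys" by (cases xs) auto
  then show "eval S xs (Suc (xs ! 0))" by (auto intro: eval_S)
qed

lemma computable_comp:
  assumes "computable m G" "length Fs = m" "\<forall>F\<in>set Fs. computable k F"
  shows "computable k (\<lambda>xs. G (map (\<lambda>F. F xs) Fs))"
proof -
  obtain g where g: "\<forall>ys. length ys = m \<longrightarrow> eval g ys (G ys)"
    using assms(1) unfolding computable_def by auto
  have "\<forall>F\<in>set Fs. \<exists>f. \<forall>xs. length xs = k \<longrightarrow> eval f xs (F xs)"
    using assms(3) unfolding computable_def by auto
  from list_all2_choice[OF this]
  obtain fs where "list_all2 (\<lambda>f F. \<forall>xs. length xs = k \<longrightarrow> eval f xs (F xs)) fs Fs" ..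
  then have "list_all2 (\<lambda>f y. eval f xs y) fs (map (\<lambda>F. F xs) Fs)" if "length xs = k" for xs
    using that by (auto simp: list_all2_conv_all_nth)
  then show ?thesis
    unfolding computable_def using g assms(2) by (auto intro!: exI[of _ "Cn g fs"] eval_Cn)
qed

lemma computable_comp1:
  "computable 1 (\<lambda>ys. g (ys ! 0)) \<Longrightarrow> computable k F \<Longrightarrow> computable k (\<lambda>xs. g (F xs))"
  using computable_comp[of 1 "\<lambda>ys. g (ys ! 0)" "[F]" k] by simp

lemma computable_comp2:
  "computable 2 (\<lambda>ys. g (ys ! 0) (ys ! 1)) \<Longrightarrow> computable k F \<Longrightarrow> computable k G \<Longrightarrow>
   computable k (\<lambda>xs. g (F xs) (G xs))"
  using computable_comp[of 2 "\<lambda>ys. g (ys ! 0) (ys ! 1)" "[F, G]" k] by simp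

lemma computable_comp3:
  "computable 3 (\<lambda>ys. g (ys ! 0) (ys ! 1) (ys ! 2)) \<Longrightarrow> computable k F \<Longrightarrow> computable k G \<Longrightarrow>
   computable k H \<Longrightarrow> computable k (\<lambda>xs. g (F xs) (G xs) (H xs))"
  using computable_comp[of 3 "\<lambda>ys. g (ys ! 0) (ys ! 1) (ys ! 2)" "[F, G, H]" k]
  by (simp add: numeral_3_eq_3)

lemma decidable_comp1:
  "decidable 1 (\<lambda>ys. P (ys ! 0)) \<Longrightarrow> computable k F \<Longrightarrow> decidable k (\<lambda>xs. P (F xs))"
  unfolding decidable_def by (rule computable_comp1[where g = "\<lambda>a. of_bool (P a)"])

lemma decidable_comp2:
  "decidable 2 (\<lambda>ys. P (ys ! 0) (ys ! 1)) \<Longrightarrow> computable k F \<Longrightarrow> computable k G \<Longrightarrow>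
   decidable k (\<lambda>xs. P (F xs) (G xs))"
  unfolding decidable_def by (rule computable_comp2[where g = "\<lambda>a b. of_bool (P a b)"])

lemma decidable_comp3:
  "decidable 3 (\<lambda>ys. P (ys ! 0) (ys ! 1) (ys ! 2)) \<Longrightarrow> computable k F \<Longrightarrow> computable k G \<Longrightarrow>
   computable k H \<Longrightarrow> decidable k (\<lambda>xs. P (F xs) (G xs) (H xs))"
  unfolding decidable_def by (rule computable_comp3[where g = "\<lambda>a b c. of_bool (P a b c)"])

lemma computable_const [computable_intros]: "computable k (\<lambda>xs. c)"
proof (induction c)
  case 0
  show ?case by (rule computable_zero)
next
  case (Suc c)
  show ?case using computable_comp1[OF computable_Suc_hd[of 1] Suc] by simp
qed

lemma computable_Suc [computable_intros]: "computable k F \<Longrightarrow> computable k (\<lambda>xs. Suc (F xs))"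
  using computable_comp1[OF computable_Suc_hd[of 1]] by simp

lemma computable_tl_nth [computable_intros]:
  "Suc i < k \<Longrightarrow> computable k (\<lambda>ys. tl ys ! i)"
  "Suc (Suc i) < k \<Longrightarrow> computable k (\<lambda>ys. tl (tl ys) ! i)"
  by (rule computable_cong[OF computable_nth]; auto simp: nth_tl)+

lemma eval_Mn_iff_Least:
  assumes f: "\<forall>ys. length ys = Suc k \<longrightarrow> eval f ys (G ys)" and xs: "length xs = k"
  shows "eval (Mn f) xs y \<longleftrightarrow> (\<exists>n. G (n # xs) = 0) \<and> y = (LEAST n. G (n # xs) = 0)"
proof
  assume "eval (Mn f) xs y"
  then have "eval f (y # xs) 0" "\<forall>m<y. \<exists>z. eval f (m # xs) (Suc z)"
    by (fastforce elim: eval.cases)+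
  then have "G (y # xs) = 0" "\<forall>m<y. G (m # xs) \<noteq> 0"
    using f xs eval_deterministic by (metis length_Cons nat.distinct(1))+
  then show "(\<exists>n. G (n # xs) = 0) \<and> y = (LEAST n. G (n # xs) = 0)"
    by (metis (mono_tags, lifting) Least_equality not_le_imp_less)
next
  assume "(\<exists>n. G (n # xs) = 0) \<and> y = (LEAST n. G (n # xs) = 0)"
  then have "G (y # xs) = 0" "\<forall>m<y. G (m # xs) \<noteq> 0"
    by (auto intro: LeastI_ex dest: not_less_Least)
  moreover have "\<exists>z. eval f (m # xs) (Suc z)" if "m < y" for m
    using f xs \<open>\<forall>m<y. G (m # xs) \<noteq> 0\<close> that by (metis length_Cons not0_implies_Suc)
  moreover have "eval f (y # xs) 0"
    using f xs \<open>G (y # xs) = 0\<close> by (metis length_Cons)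
  ultimately show "eval (Mn f) xs y"
    by (auto intro: eval_Mn)
qed

lemma computable_Least:
  assumes "computable (Suc k) F" "\<And>xs. length xs = k \<Longrightarrow> \<exists>n. F (n # xs) = 0"
  shows "computable k (\<lambda>xs. LEAST n. F (n # xs) = 0)"
proof -
  obtain f where "\<forall>ys. length ys = Suc k \<longrightarrow> eval f ys (F ys)"
    using assms(1) unfolding computable_def by auto
  then show ?thesis
    unfolding computable_def using assms(2) eval_Mn_iff_Least by blast
qed

(* The arity is written n = Suc k so that the rule also applies to goals whose arity is a numeral. *)
lemma computable_prim_rec:
  assumes "n = Suc k" "computable k F" "computable (Suc (Suc k)) G"
    and "\<And>xs. length xs = k \<Longrightarrow> H 0 xs = F xs"
    and "\<And>m xs. length xs = k \<Longrightarrow> H (Suc m) xs = G (m # H m xs # xs)"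
  shows "computable n (\<lambda>ys. H (ys ! 0) (tl ys))"
proof -
  obtain f g where f: "\<forall>xs. length xs = k \<longrightarrow> eval f xs (F xs)"
    and g: "\<forall>xs. length xs = Suc (Suc k) \<longrightarrow> eval g xs (G xs)"
    using assms(2,3) unfolding computable_def by auto
  have Pr: "eval (Pr f g) (m # xs) (H m xs)" if "length xs = k" for m xs
    by (induction m) (use f g that assms(4,5) in \<open>auto intro: eval_Pr0 eval_PrS\<close>)
  show ?thesis
    unfolding computable_def assms(1)
    by (intro exI[of _ "Pr f g"] allI impI) (auto simp: length_Suc_conv intro: Pr)
qed

lemma computable_pred: "computable 1 (\<lambda>ys. ys ! 0 - 1)"
  by (rule computable_cong[OF computable_prim_rec[where k = 0 and F = "\<lambda>_. 0"
        and G = "\<lambda>ys. ys ! 0" and H = "\<lambda>n xs. n - 1"]])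
    (auto intro: computable_const computable_nth)

lemma computable_add [computable_intros]:
  "computable k F \<Longrightarrow> computable k G \<Longrightarrow> computable k (\<lambda>xs. F xs + G xs)"
proof (rule computable_comp2[where g = "(+)"])
  show "computable 2 (\<lambda>ys. ys ! 0 + ys ! 1)"
    by (rule computable_cong[OF computable_prim_rec[where k = 1 and F = "\<lambda>xs. xs ! 0"
          and G = "\<lambda>ys. Suc (ys ! 1)" and H = "\<lambda>n xs. n + xs ! 0"]])
      (auto intro: computable_Suc computable_nth simp: nth_tl)
qed

lemma computable_diff [computable_intros]:
  assumes "computable k F" "computable k G"
  shows "computable k (\<lambda>xs. F xs - G xs)"
proof -
  have pred: "computable (Suc (Suc 1)) (\<lambda>ys. ys ! 1 - 1)"
    by (rule computable_comp1[OF computable_pred computable_nth]) simp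
  have "computable 2 (\<lambda>ys. ys ! 1 - ys ! 0)"
    by (rule computable_cong[OF computable_prim_rec[where k = 1 and F = "\<lambda>xs. xs ! 0"
          and G = "\<lambda>ys. ys ! 1 - 1" and H = "\<lambda>n xs. xs ! 0 - n", OF _ _ pred]])
      (auto intro: computable_nth simp: nth_tl)
  from computable_comp2[where g = "\<lambda>a b. b - a", OF this assms(2,1)] show ?thesis .
qed

lemma computable_mult [computable_intros]:
  "computable k F \<Longrightarrow> computable k G \<Longrightarrow> computable k (\<lambda>xs. F xs * G xs)"
proof (rule computable_comp2[where g = "(*)"])
  have step: "computable (Suc (Suc 1)) (\<lambda>ys. ys ! 1 + ys ! 2)"
    by (intro computable_add computable_nth) simp_all
  show "computable 2 (\<lambda>ys. ys ! 0 * ys ! 1)"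
    by (rule computable_cong[OF computable_prim_rec[where k = 1 and F = "\<lambda>xs. 0"
          and G = "\<lambda>ys. ys ! 1 + ys ! 2" and H = "\<lambda>n xs. n * xs ! 0", OF _ _ step]])
      (auto intro: computable_const simp: nth_tl)
qed

lemma decidable_eq [computable_intros]:
  "computable k F \<Longrightarrow> computable k G \<Longrightarrow> decidable k (\<lambda>xs. F xs = G xs)"
  unfolding decidable_def
  by (rule computable_cong[of _ "\<lambda>xs. 1 - ((F xs - G xs) + (G xs - F xs))"])
    (auto intro!: computable_intros)

lemma decidable_less [computable_intros]:
  "computable k F \<Longrightarrow> computable k G \<Longrightarrow> decidable k (\<lambda>xs. F xs < G xs)"
  unfolding decidable_def
  by (rule computable_cong[of _ "\<lambda>xs. 1 - (Suc (F xs) - G xs)"]) (auto intro!: computable_intros)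

lemma decidable_conj [computable_intros]:
  "decidable k P \<Longrightarrow> decidable k Q \<Longrightarrow> decidable k (\<lambda>xs. P xs \<and> Q xs)"
  unfolding decidable_def
  by (rule computable_cong[of _ "\<lambda>xs. of_bool (P xs) * of_bool (Q xs)"])
    (auto intro!: computable_intros)

lemma decidable_not [computable_intros]: "decidable k P \<Longrightarrow> decidable k (\<lambda>xs. \<not> P xs)"
  unfolding decidable_def
  by (rule computable_cong[of _ "\<lambda>xs. 1 - of_bool (P xs)"]) (auto intro!: computable_intros)

lemma decidable_disj [computable_intros]:
  "decidable k P \<Longrightarrow> decidable k Q \<Longrightarrow> decidable k (\<lambda>xs. P xs \<or> Q xs)"
  using decidable_not decidable_conj[of k "\<lambda>xs. \<not> P xs" "\<lambda>xs. \<not> Q xs"] by fastforce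

lemma decidable_imp [computable_intros]:
  "decidable k P \<Longrightarrow> decidable k Q \<Longrightarrow> decidable k (\<lambda>xs. P xs \<longrightarrow> Q xs)"
  using decidable_not decidable_disj[of k "\<lambda>xs. \<not> P xs" Q] by fastforce

lemma decidable_in_insert [computable_intros]:
  "decidable k (\<lambda>xs. G xs = F xs \<or> G xs \<in> X xs) \<Longrightarrow> decidable k (\<lambda>xs. G xs \<in> insert (F xs) (X xs))"
  by simp

lemma computable_subst_hd:
  assumes "computable (Suc k) H" "computable k N"
  shows "computable k (\<lambda>xs. H (N xs # xs))"
proof -
  have "computable k (\<lambda>xs. H (map (\<lambda>F. F xs) (N # map (\<lambda>i xs. xs ! i) [0..<k])))"
    using assms by (intro computable_comp) (auto intro: computable_nth)
  then show ?thesis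
    by (rule computable_cong) (simp add: o_def, metis map_nth)
qed

lemma computable_drop_snd:
  assumes "computable (Suc k) H"
  shows "computable (Suc (Suc k)) (\<lambda>ys. H (ys ! 0 # tl (tl ys)))"
proof -
  have "computable (Suc (Suc k))
      (\<lambda>ys. H (map (\<lambda>F. F ys) ((\<lambda>ys. ys ! 0) # map (\<lambda>i ys. ys ! Suc (Suc i)) [0..<k])))"
    using assms by (intro computable_comp) (auto intro: computable_nth)
  moreover have "map (\<lambda>i. ys ! Suc (Suc i)) [0..<k] = tl (tl ys)" if "length ys = Suc (Suc k)" for ys :: "nat list"
    using that by (intro nth_equalityI) (auto simp: nth_tl)
  ultimately show ?thesis
    by (elim computable_cong) (simp add: o_def)
qed

lemma decidable_bounded_all [computable_intros]:
  assumes "decidable (Suc k) (\<lambda>ys. P (ys ! 0) (tl ys))" "computable k N"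
  shows "decidable k (\<lambda>xs. \<forall>j<N xs. P j xs)"
proof -
  have step: "computable (Suc (Suc k)) (\<lambda>ys. of_bool (P (ys ! 0) (tl (tl ys))) * ys ! 1)"
    using computable_drop_snd[OF assms(1)[unfolded decidable_def]]
    by (intro computable_mult computable_nth) simp_all
  have "computable (Suc k) (\<lambda>ys. of_bool (\<forall>j<ys ! 0. P j (tl ys)))"
    by (rule computable_prim_rec[where F = "\<lambda>_. 1", OF _ computable_const step])
      (auto simp: less_Suc_eq)
  from computable_subst_hd[OF this assms(2)] show ?thesis
    unfolding decidable_def by simp
qed

lemma decidable_bounded_ex [computable_intros]:
  assumes "decidable (Suc k) (\<lambda>ys. P (ys ! 0) (tl ys))" "computable k N"
  shows "decidable k (\<lambda>xs. \<exists>j<N xs. P j xs)"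
proof -
  have "decidable k (\<lambda>xs. \<not> (\<forall>j<N xs. \<not> P j xs))"
    by (intro computable_intros assms)
  then show ?thesis by simp
qed

lemma computable_Least_decidable:
  assumes "decidable (Suc k) (\<lambda>ys. P (ys ! 0) (tl ys))" "\<And>xs. length xs = k \<Longrightarrow> \<exists>n. P n xs"
  shows "computable k (\<lambda>xs. LEAST n. P n xs)"
proof -
  have "computable (Suc k) (\<lambda>ys. of_bool (\<not> P (ys ! 0) (tl ys)))"
    using decidable_not[OF assms(1)] unfolding decidable_def .
  from computable_Least[OF this] show ?thesis
    using assms(2) by simp
qed

lemma computable_funpow:
  assumes "computable 1 (\<lambda>ys. g (ys ! 0))" "computable k N" "computable k F"
  shows "computable k (\<lambda>xs. (g ^^ N xs) (F xs))"
proof -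
  have step: "computable (Suc (Suc 1)) (\<lambda>ys. g (ys ! 1))"
    by (rule computable_comp1[OF assms(1) computable_nth]) simp
  have "computable 2 (\<lambda>ys. (g ^^ (ys ! 0)) (ys ! 1))"
    by (rule computable_cong[OF computable_prim_rec[where k = 1 and F = "\<lambda>xs. xs ! 0"
          and H = "\<lambda>n xs. (g ^^ n) (xs ! 0)", OF _ _ step]])
      (auto intro: computable_nth simp: nth_tl)
  from computable_comp2[OF this assms(2,3)] show ?thesis .
qed

lemma computable_tl:
  assumes "computable k F"
  shows "computable (Suc k) (\<lambda>ys. F (tl ys))"
proof -
  have "computable (Suc k) (\<lambda>ys. F (map (\<lambda>G. G ys) (map (\<lambda>i ys. ys ! Suc i) [0..<k])))"
    using assms by (intro computable_comp) (auto intro: computable_nth)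
  moreover have "map (\<lambda>i. ys ! Suc i) [0..<k] = tl ys" if "length ys = Suc k" for ys :: "nat list"
    using that by (intro nth_equalityI) (auto simp: nth_tl)
  ultimately show ?thesis
    by (elim computable_cong) (simp add: o_def)
qed

lemma computable_replace_hd:
  assumes "computable (Suc k) H" "computable (Suc k) G"
  shows "computable (Suc k) (\<lambda>ys. H (G ys # tl ys))"
  using computable_subst_hd[OF computable_drop_snd[OF assms(1)] assms(2)] by simp

lemma decidable_replace_hd:
  "decidable (Suc k) (\<lambda>ys. P (ys ! 0) (tl ys)) \<Longrightarrow> computable (Suc k) G \<Longrightarrow>
   decidable (Suc k) (\<lambda>ys. P (G ys) (tl ys))"
  unfolding decidable_def using computable_replace_hd[where H = "\<lambda>ys. of_bool (P (ys ! 0) (tl ys))"]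
  by simp

section \<open>Coded pairs and lists\<close>

lemma computable_triangle: "computable 1 (\<lambda>ys. triangle (ys ! 0))"
  by (rule computable_cong[OF computable_prim_rec[where k = 0 and F = "\<lambda>_. 0"
        and G = "\<lambda>ys. ys ! 1 + Suc (ys ! 0)" and H = "\<lambda>n xs. triangle n"]])
    (auto intro!: computable_intros)

lemma computable_prod_encode [computable_intros]:
  "computable k F \<Longrightarrow> computable k G \<Longrightarrow> computable k (\<lambda>xs. prod_encode (F xs, G xs))"
  unfolding prod_encode_def by (simp, intro computable_intros computable_comp1[OF computable_triangle])

abbreviation pfst :: "nat \<Rightarrow> nat" where "pfst m \<equiv> fst (prod_decode m)"
abbreviation psnd :: "nat \<Rightarrow> nat" where "psnd m \<equiv> snd (prod_decode m)"

lemma prod_encode_pfst_psnd: "prod_encode (pfst m, psnd m) = m"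
  by simp

lemma prod_decode_bounded_witness: "\<exists>a<Suc m. \<exists>b<Suc m. prod_encode (a, b) = m"
  by (metis le_imp_less_Suc le_prod_encode_1 le_prod_encode_2 prod.collapse prod_decode_inverse)

lemma prod_decode_eq_Least:
  "pfst m = (LEAST a. \<exists>b<Suc m. prod_encode (a, b) = m)"
  "psnd m = (LEAST b. \<exists>a<Suc m. prod_encode (a, b) = m)"
proof -
  have m: "prod_encode (pfst m, psnd m) = m" "pfst m < Suc m" "psnd m < Suc m"
    using prod_decode_bounded_witness[of m] prod_encode_pfst_psnd[of m]
    by (metis fst_conv prod_encode_inverse snd_conv)+
  have unique: "prod_encode (a, b) = m \<Longrightarrow> a = pfst m \<and> b = psnd m" for a b
    by (metis fst_conv prod_encode_inverse snd_conv)
  show "pfst m = (LEAST a. \<exists>b<Suc m. prod_encode (a, b) = m)"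
    by (rule Least_equality[symmetric]) (use m unique in auto)
  show "psnd m = (LEAST b. \<exists>a<Suc m. prod_encode (a, b) = m)"
    by (rule Least_equality[symmetric]) (use m unique in auto)
qed

lemma computable_pfst [computable_intros]:
  assumes "computable k F"
  shows "computable k (\<lambda>xs. pfst (F xs))"
proof -
  have "computable 1 (\<lambda>ys. LEAST a. \<exists>b<Suc (ys ! 0). prod_encode (a, b) = ys ! 0)"
    by (rule computable_Least_decidable, intro computable_intros, simp_all)
      (meson prod_decode_bounded_witness)
  then have "computable 1 (\<lambda>ys. pfst (ys ! 0))"
    by (simp only: prod_decode_eq_Least)
  from computable_comp1[OF this assms] show ?thesis .
qed

lemma computable_psnd [computable_intros]:
  assumes "computable k F"
  shows "computable k (\<lambda>xs. psnd (F xs))"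
proof -
  have "computable 1 (\<lambda>ys. LEAST b. \<exists>a<Suc (ys ! 0). prod_encode (a, b) = ys ! 0)"
    by (rule computable_Least_decidable, intro computable_intros, simp_all)
      (meson prod_decode_bounded_witness)
  then have "computable 1 (\<lambda>ys. psnd (ys ! 0))"
    by (simp only: prod_decode_eq_Least)
  from computable_comp1[OF this assms] show ?thesis .
qed

lemma computable_div_2 [computable_intros]:
  assumes "computable k F"
  shows "computable k (\<lambda>xs. F xs div 2)"
proof -
  have "computable 1 (\<lambda>ys. LEAST q. ys ! 0 < 2 * q + 2)"
    by (rule computable_Least_decidable, intro computable_intros, simp_all) presburger
  moreover have "(LEAST q. x < 2 * q + 2) = x div 2" for x :: nat
    by (rule Least_equality) presburger+
  ultimately have "computable 1 (\<lambda>ys. ys ! 0 div 2)"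
    by simp
  from computable_comp1[OF this assms] show ?thesis .
qed

lemma decidable_even [computable_intros]:
  assumes "computable k F"
  shows "decidable k (\<lambda>xs. even (F xs))"
proof (rule decidable_cong)
  show "decidable k (\<lambda>xs. F xs = 2 * (F xs div 2))"
    using assms by (intro computable_intros)
qed presburger

(* Total counterparts of hd, tl and nth on list codes: enc_nth c j is determined also beyond the end of
   the list, as it must be for computability, which is a statement about all inputs. *)
definition enc_hd :: "nat \<Rightarrow> nat" where
  "enc_hd c = pfst (c - 1)"

definition enc_tl :: "nat \<Rightarrow> nat" where
  "enc_tl c = psnd (c - 1)"

definition enc_nth :: "nat \<Rightarrow> nat \<Rightarrow> nat" where
  "enc_nth c j = enc_hd ((enc_tl ^^ j) c)"

definition enc_cons :: "nat \<Rightarrow> nat \<Rightarrow> nat" where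
  "enc_cons x c = Suc (prod_encode (x, c))"

lemma enc_hd_Suc_prod_encode [simp]: "enc_hd (Suc (prod_encode (x, c))) = x"
  by (simp add: enc_hd_def)

lemma enc_tl_Suc_prod_encode [simp]: "enc_tl (Suc (prod_encode (x, c))) = c"
  by (simp add: enc_tl_def)

lemma list_decode_enc_cons [simp]: "list_decode (enc_cons x c) = x # list_decode c"
  by (simp add: enc_cons_def)

lemma enc_cons_0: "enc_cons x 0 = list_encode [x]"
  by (simp add: enc_cons_def)

lemma less_list_encode: "x \<in> set xs \<Longrightarrow> x < list_encode xs"
proof (induction xs)
  case (Cons a xs)
  have "a \<le> prod_encode (a, list_encode xs)" "list_encode xs \<le> prod_encode (a, list_encode xs)"
    by (rule le_prod_encode_1, rule le_prod_encode_2)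
  with Cons show ?case by auto
qed simp

lemma list_decode_eq_enc_Cons: "c \<noteq> 0 \<Longrightarrow> list_decode c = enc_hd c # list_decode (enc_tl c)"
  by (cases c) (auto simp: enc_hd_def enc_tl_def split: prod.split)

lemma enc_tl_funpow: "(enc_tl ^^ j) c = list_encode (drop j (list_decode c))"
proof (induction j arbitrary: c)
  case (Suc j)
  have "list_decode (enc_tl c) = drop 1 (list_decode c)"
  proof (cases "c = 0")
    case True
    then show ?thesis by (simp add: enc_tl_def prod_decode_def prod_decode_aux.simps)
  qed (simp add: list_decode_eq_enc_Cons)
  then show ?case
    using Suc.IH[of "enc_tl c"] by (simp add: funpow_swap1)
qed simp

lemma enc_nth_eq_nth: "j < length (list_decode c) \<Longrightarrow> enc_nth c j = list_decode c ! j"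
  by (simp add: enc_nth_def enc_tl_funpow enc_hd_def Cons_nth_drop_Suc[symmetric])

lemma enc_tl_funpow_length: "(enc_tl ^^ length (list_decode c)) c = 0"
  by (simp add: enc_tl_funpow)

lemma length_list_decode_eq_Least: "length (list_decode c) = (LEAST j. (enc_tl ^^ j) c = 0)"
proof (rule Least_equality[symmetric])
  show "(enc_tl ^^ length (list_decode c)) c = 0"
    by (rule enc_tl_funpow_length)
  show "length (list_decode c) \<le> j" if "(enc_tl ^^ j) c = 0" for j
    using that list_encode_eq[of _ "[]"] by (simp add: enc_tl_funpow)
qed

lemma computable_enc_hd [computable_intros]: "computable k F \<Longrightarrow> computable k (\<lambda>xs. enc_hd (F xs))"
  unfolding enc_hd_def by (intro computable_intros)

lemma computable_enc_tl [computable_intros]: "computable k F \<Longrightarrow> computable k (\<lambda>xs. enc_tl (F xs))"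
  unfolding enc_tl_def by (intro computable_intros)

lemma computable_enc_tl_funpow [computable_intros]:
  "computable k N \<Longrightarrow> computable k F \<Longrightarrow> computable k (\<lambda>xs. (enc_tl ^^ N xs) (F xs))"
  by (rule computable_funpow) (intro computable_intros; simp)

lemma computable_enc_cons [computable_intros]:
  "computable k F \<Longrightarrow> computable k G \<Longrightarrow> computable k (\<lambda>xs. enc_cons (F xs) (G xs))"
  unfolding enc_cons_def by (intro computable_intros)

lemma computable_enc_nth [computable_intros]:
  "computable k F \<Longrightarrow> computable k G \<Longrightarrow> computable k (\<lambda>xs. enc_nth (F xs) (G xs))"
  unfolding enc_nth_def by (intro computable_intros)

lemma computable_length_list_decode [computable_intros]:
  assumes "computable k F"
  shows "computable k (\<lambda>xs. length (list_decode (F xs)))"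
proof -
  have "computable 1 (\<lambda>ys. LEAST j. (enc_tl ^^ j) (ys ! 0) = 0)"
    by (rule computable_Least_decidable, intro computable_intros, simp_all)
      (use enc_tl_funpow_length in blast)
  then have "computable 1 (\<lambda>ys. length (list_decode (ys ! 0)))"
    by (simp only: length_list_decode_eq_Least)
  from computable_comp1[OF this assms] show ?thesis .
qed

lemma decidable_in_set_take_list_decode [computable_intros]:
  assumes "computable k F" "computable k G" "computable k I"
  shows "decidable k (\<lambda>xs. G xs \<in> set (take (I xs) (list_decode (F xs))))"
proof (rule decidable_cong)
  show "decidable k (\<lambda>xs. \<exists>j<I xs. j < length (list_decode (F xs)) \<and> enc_nth (F xs) j = G xs)"
    by (intro computable_intros computable_tl[OF assms(1)] computable_tl[OF assms(2)] assms(3))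
      simp_all
  show "(\<exists>j<I xs. j < length (list_decode (F xs)) \<and> enc_nth (F xs) j = G xs) \<longleftrightarrow>
      G xs \<in> set (take (I xs) (list_decode (F xs)))" for xs
    by (auto simp: in_set_conv_nth enc_nth_eq_nth)
qed

lemma decidable_in_set_list_decode [computable_intros]:
  assumes "computable k F" "computable k G"
  shows "decidable k (\<lambda>xs. G xs \<in> set (list_decode (F xs)))"
  using decidable_in_set_take_list_decode[OF assms computable_length_list_decode[OF assms(1)]]
  by simp

lemma decidable_ball_list_decode [computable_intros]:
  assumes "decidable (Suc k) (\<lambda>ys. P (ys ! 0) (tl ys))" "computable k F"
  shows "decidable k (\<lambda>xs. \<forall>y\<in>set (list_decode (F xs)). P y xs)"
proof (rule decidable_cong)
  have "computable (Suc k) (\<lambda>ys. enc_nth (F (tl ys)) (ys ! 0))"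
    by (intro computable_intros computable_tl[OF assms(2)]) simp
  from decidable_replace_hd[OF assms(1) this]
  show "decidable k (\<lambda>xs. \<forall>j<length (list_decode (F xs)). P (enc_nth (F xs) j) xs)"
    by (intro computable_intros assms(2)) simp_all
  show "(\<forall>j<length (list_decode (F xs)). P (enc_nth (F xs) j) xs) \<longleftrightarrow>
      (\<forall>y\<in>set (list_decode (F xs)). P y xs)" for xs
    by (auto simp: all_set_conv_all_nth enc_nth_eq_nth)
qed

section \<open>Certificates of computations\<close>

(* A claim is either code_claim e, "e is the code of a program", or eval_claim e xs y, "program e
   maps the list coded by xs to y". *)
definition code_claim :: "nat \<Rightarrow> nat" where
  "code_claim e = prod_encode (0, e)"

definition eval_claim :: "nat \<Rightarrow> nat \<Rightarrow> nat \<Rightarrow> nat" where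
  "eval_claim e xs y = prod_encode (1, prod_encode (e, prod_encode (xs, y)))"

lemma le_eval_claim: "xs \<le> eval_claim e xs y" "y \<le> eval_claim e xs y"
  unfolding eval_claim_def by (meson le_prod_encode_1 le_prod_encode_2 order_trans)+

lemma computable_code_claim [computable_intros]:
  "computable k F \<Longrightarrow> computable k (\<lambda>xs. code_claim (F xs))"
  unfolding code_claim_def by (intro computable_intros)

lemma computable_eval_claim [computable_intros]:
  "computable k F \<Longrightarrow> computable k G \<Longrightarrow> computable k H \<Longrightarrow>
   computable k (\<lambda>xs. eval_claim (F xs) (G xs) (H xs))"
  unfolding eval_claim_def by (intro computable_intros)

(* Code claims are needed only by Pr0, to know that the step function of Pr is a program. *)
inductive code_justified :: "(nat \<Rightarrow> bool) \<Rightarrow> nat \<Rightarrow> bool" for mem where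
  Z: "pfst e = 0 \<Longrightarrow> psnd e = 0 \<Longrightarrow> code_justified mem e"
| S: "pfst e = 1 \<Longrightarrow> psnd e = 0 \<Longrightarrow> code_justified mem e"
| Proj: "pfst e = 2 \<Longrightarrow> code_justified mem e"
| Cn: "pfst e = 3 \<Longrightarrow> mem (code_claim (pfst (psnd e))) \<Longrightarrow>
   \<forall>g\<in>set (list_decode (psnd (psnd e))). mem (code_claim g) \<Longrightarrow> code_justified mem e"
| Pr: "pfst e = 4 \<Longrightarrow> mem (code_claim (pfst (psnd e))) \<Longrightarrow> mem (code_claim (psnd (psnd e))) \<Longrightarrow>
   code_justified mem e"
| Mn: "pfst e = 5 \<Longrightarrow> mem (code_claim (psnd e)) \<Longrightarrow> code_justified mem e"

(* The
   bound B caps the witnesses not determined by the claim (the intermediate values of Cn, the previous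
   value of Pr and the values below the minimum of Mn), which makes justification decidable. *)
inductive eval_justified :: "(nat \<Rightarrow> bool) \<Rightarrow> nat \<Rightarrow> nat \<Rightarrow> nat \<Rightarrow> nat \<Rightarrow> bool" for mem B where
  Z: "pfst e = 0 \<Longrightarrow> psnd e = 0 \<Longrightarrow> y = 0 \<Longrightarrow> eval_justified mem B e xs y"
| S: "pfst e = 1 \<Longrightarrow> psnd e = 0 \<Longrightarrow> xs \<noteq> 0 \<Longrightarrow> y = Suc (enc_hd xs) \<Longrightarrow>
   eval_justified mem B e xs y"
| Proj: "pfst e = 2 \<Longrightarrow> psnd e < length (list_decode xs) \<Longrightarrow> y = enc_nth xs (psnd e) \<Longrightarrow>
   eval_justified mem B e xs y"
| Cn: "pfst e = 3 \<Longrightarrow> ys < B \<Longrightarrow> length (list_decode ys) = length (list_decode (psnd (psnd e))) \<Longrightarrow>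
   mem (eval_claim (pfst (psnd e)) ys y) \<Longrightarrow>
   \<forall>k<length (list_decode ys). mem (eval_claim (enc_nth (psnd (psnd e)) k) xs (enc_nth ys k)) \<Longrightarrow>
   eval_justified mem B e xs y"
| Pr0: "pfst e = 4 \<Longrightarrow> xs \<noteq> 0 \<Longrightarrow> enc_hd xs = 0 \<Longrightarrow> mem (eval_claim (pfst (psnd e)) (enc_tl xs) y) \<Longrightarrow>
   mem (code_claim (psnd (psnd e))) \<Longrightarrow> eval_justified mem B e xs y"
| PrS: "pfst e = 4 \<Longrightarrow> xs \<noteq> 0 \<Longrightarrow> enc_hd xs \<noteq> 0 \<Longrightarrow> z < B \<Longrightarrow>
   mem (eval_claim e (enc_cons (enc_hd xs - 1) (enc_tl xs)) z) \<Longrightarrow>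
   mem (eval_claim (psnd (psnd e)) (enc_cons (enc_hd xs - 1) (enc_cons z (enc_tl xs))) y) \<Longrightarrow>
   eval_justified mem B e xs y"
| Mn: "pfst e = 5 \<Longrightarrow> mem (eval_claim (psnd e) (enc_cons y xs) 0) \<Longrightarrow>
   \<forall>m<y. \<exists>z<B. mem (eval_claim (psnd e) (enc_cons m xs) (Suc z)) \<Longrightarrow>
   eval_justified mem B e xs y"

definition claim_justified :: "(nat \<Rightarrow> bool) \<Rightarrow> nat \<Rightarrow> nat \<Rightarrow> bool" where
  "claim_justified mem B v \<longleftrightarrow> (pfst v = 0 \<and> code_justified mem (psnd v)) \<or>
     (pfst v = 1 \<and> eval_justified mem B (pfst (psnd v)) (pfst (psnd (psnd v))) (psnd (psnd (psnd v))))"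

lemma claim_justified_code_claim [simp]:
  "claim_justified mem B (code_claim e) \<longleftrightarrow> code_justified mem e"
  by (simp add: claim_justified_def code_claim_def)

lemma claim_justified_eval_claim [simp]:
  "claim_justified mem B (eval_claim e xs y) \<longleftrightarrow> eval_justified mem B e xs y"
  by (simp add: claim_justified_def eval_claim_def)

lemma decidable_claim_justified:
  "decidable 3 (\<lambda>ys. claim_justified (\<lambda>w. w \<in> set (take (ys ! 1) (list_decode (ys ! 0)))) (ys ! 0) (ys ! 2))"
  unfolding claim_justified_def code_justified.simps eval_justified.simps
  by (simp, intro computable_intros, simp_all)

definition claim_holds :: "nat \<Rightarrow> bool" where
  "claim_holds v \<longleftrightarrow> (pfst v = 0 \<longrightarrow> psnd v \<in> range code) \<and>
     (pfst v = 1 \<longrightarrow> (\<exists>f. code f = pfst (psnd v) \<and>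
        eval f (list_decode (pfst (psnd (psnd v)))) (psnd (psnd (psnd v)))))"

lemma claim_holds_code_claim [simp]: "claim_holds (code_claim e) \<longleftrightarrow> e \<in> range code"
  by (simp add: claim_holds_def code_claim_def)

lemma claim_holds_eval_claim [simp]:
  "claim_holds (eval_claim e xs y) \<longleftrightarrow> (\<exists>f. code f = e \<and> eval f (list_decode xs) y)"
  by (simp add: claim_holds_def eval_claim_def)

lemma inj_code: "inj code"
proof (rule injI)
  show "code f = code g \<Longrightarrow> f = g" for f g
  proof (induction f arbitrary: g)
    case (Cn f fs)
    then obtain f' fs' where g: "g = Cn f' fs'" "code f = code f'" "map code fs = map code fs'"
      by (cases g) (auto simp: list_encode_eq)
    have "fs = fs'"
      by (rule list.inj_map_strong[OF _ g(3)]) (use Cn.IH(2) in blast)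
    with g Cn.IH(1) show ?case by simp
  qed (case_tac g; auto)+
qed

lemma code_justified_sound:
  assumes mem: "\<And>w. mem w \<Longrightarrow> claim_holds w" and "code_justified mem e"
  shows "e \<in> range code"
  using assms(2)
proof cases
  case Z
  then have "e = code Z" by (metis code.simps(1) prod_encode_pfst_psnd)
  then show ?thesis by blast
next
  case S
  then have "e = code S" by (metis code.simps(2) prod_encode_pfst_psnd)
  then show ?thesis by blast
next
  case Proj
  then have "e = code (Proj (psnd e))" by (metis code.simps(3) prod_encode_pfst_psnd)
  then show ?thesis by blast
next
  case Cn
  then obtain f gs where "code f = pfst (psnd e)" "list_decode (psnd (psnd e)) = map code gs"
    using mem by (fastforce simp: ex_map_conv)
  then have "e = code (Cn f gs)"
    using Cn by (metis code.simps(4) list_decode_inverse prod_encode_pfst_psnd)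
  then show ?thesis by blast
next
  case Pr
  then obtain f g where "code f = pfst (psnd e)" "code g = psnd (psnd e)"
    using mem by fastforce
  then have "e = code (Pr f g)"
    using Pr by (metis code.simps(5) prod_encode_pfst_psnd)
  then show ?thesis by blast
next
  case Mn
  then obtain f where "code f = psnd e"
    using mem by fastforce
  then have "e = code (Mn f)"
    using Mn by (metis code.simps(6) prod_encode_pfst_psnd)
  then show ?thesis by blast
qed

lemma programs_of_codes:
  assumes "\<And>k. k < length L \<Longrightarrow> \<exists>g. code g = L ! k \<and> P k g"
  shows "\<exists>gs. map code gs = L \<and> (\<forall>k<length L. P k (gs ! k))"
proof (intro exI conjI allI impI)
  have "code (inv code (L ! k)) = L ! k" if "k < length L" for k
    using assms[OF that] by (metis f_inv_into_f rangeI)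
  then show "map code (map (inv code) L) = L"
    by (intro nth_equalityI) simp_all
  show "P k (map (inv code) L ! k)" if "k < length L" for k
    using assms[OF that] inj_code that by (metis inv_f_f nth_map)
qed

lemma eval_justified_Cn_sound:
  assumes mem: "\<And>w. mem w \<Longrightarrow> claim_holds w"
    and "pfst e = 3" "length (list_decode ys) = length (list_decode (psnd (psnd e)))"
    and "mem (eval_claim (pfst (psnd e)) ys y)"
    and "\<forall>k<length (list_decode ys). mem (eval_claim (enc_nth (psnd (psnd e)) k) xs (enc_nth ys k))"
  shows "\<exists>f. code f = e \<and> eval f (list_decode xs) y"
proof -
  let ?L = "list_decode (psnd (psnd e))" and ?Y = "list_decode ys"
  obtain f where f: "code f = pfst (psnd e)" "eval f ?Y y"
    using assms(4) mem by fastforce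
  have "\<exists>g. code g = ?L ! k \<and> eval g (list_decode xs) (?Y ! k)" if k: "k < length ?L" for k
  proof -
    have "k < length ?Y"
      using assms(3) k by simp
    then have "claim_holds (eval_claim (enc_nth (psnd (psnd e)) k) xs (enc_nth ys k))"
      using assms(5) mem by blast
    then show ?thesis
      using k \<open>k < length ?Y\<close> by (simp add: enc_nth_eq_nth)
  qed
  from programs_of_codes[of ?L "\<lambda>k g. eval g (list_decode xs) (?Y ! k)", OF this]
  obtain gs where gs: "map code gs = ?L" "\<forall>k<length ?L. eval (gs ! k) (list_decode xs) (?Y ! k)"
    by blast
  moreover have "length gs = length ?Y"
    using gs(1) assms(3) by (metis length_map)
  ultimately have "list_all2 (\<lambda>g y. eval g (list_decode xs) y) gs ?Y"
    using assms(3) by (simp add: list_all2_conv_all_nth)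
  then have "eval (Cn f gs) (list_decode xs) y"
    using f(2) by (rule eval_Cn)
  moreover have "e = code (Cn f gs)"
    using assms(2) f(1) gs(1) by (metis code.simps(4) list_decode_inverse prod_encode_pfst_psnd)
  ultimately show ?thesis by blast
qed

lemma eval_justified_PrS_sound:
  assumes mem: "\<And>w. mem w \<Longrightarrow> claim_holds w"
    and "pfst e = 4" "xs \<noteq> 0" "enc_hd xs \<noteq> 0"
    and "mem (eval_claim e (enc_cons (enc_hd xs - 1) (enc_tl xs)) z)"
    and "mem (eval_claim (psnd (psnd e)) (enc_cons (enc_hd xs - 1) (enc_cons z (enc_tl xs))) y)"
  shows "\<exists>f. code f = e \<and> eval f (list_decode xs) y"
proof -
  let ?n = "enc_hd xs - 1" and ?X = "list_decode (enc_tl xs)"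
  obtain P where P: "code P = e" "eval P (?n # ?X) z"
    using assms(5) mem by fastforce
  obtain g where g: "code g = psnd (psnd e)" "eval g (?n # z # ?X) y"
    using assms(6) mem by fastforce
  obtain f' g' where "P = Pr f' g'"
    using P(1) assms(2) by (cases P) auto
  with P g have "eval P (Suc ?n # ?X) y"
    using inj_code by (auto simp: inj_eq intro: eval_PrS)
  moreover have "list_decode xs = Suc ?n # ?X"
    using assms(3,4) list_decode_eq_enc_Cons by simp
  ultimately show ?thesis
    using P(1) by auto
qed

lemma eval_justified_Mn_sound:
  assumes mem: "\<And>w. mem w \<Longrightarrow> claim_holds w"
    and "pfst e = 5" "mem (eval_claim (psnd e) (enc_cons y xs) 0)"
    and "\<forall>m<y. \<exists>z<B. mem (eval_claim (psnd e) (enc_cons m xs) (Suc z))"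
  shows "\<exists>f. code f = e \<and> eval f (list_decode xs) y"
proof -
  obtain f where f: "code f = psnd e" "eval f (y # list_decode xs) 0"
    using assms(3) mem by fastforce
  have "\<exists>z. eval f (m # list_decode xs) (Suc z)" if "m < y" for m
  proof -
    obtain z where "mem (eval_claim (psnd e) (enc_cons m xs) (Suc z))"
      using assms(4) \<open>m < y\<close> by blast
    then obtain f' where "code f' = psnd e" "eval f' (m # list_decode xs) (Suc z)"
      using mem by fastforce
    then show ?thesis
      using f(1) inj_code by (metis injD)
  qed
  with f have "e = code (Mn f)" "eval (Mn f) (list_decode xs) y"
    using assms(2) by (auto intro: eval_Mn, metis prod_encode_pfst_psnd)
  then show ?thesis by blast
qed

lemma eval_justified_sound:
  assumes mem: "\<And>w. mem w \<Longrightarrow> claim_holds w" and "eval_justified mem B e xs y"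
  shows "\<exists>f. code f = e \<and> eval f (list_decode xs) y"
  using assms(2)
proof cases
  case Z
  then have "e = code Z" by (metis code.simps(1) prod_encode_pfst_psnd)
  then show ?thesis using Z eval_Z by blast
next
  case S
  have "e = code S" using S by (metis code.simps(2) prod_encode_pfst_psnd)
  moreover have "eval S (list_decode xs) y" using S by (simp add: list_decode_eq_enc_Cons eval_S)
  ultimately show ?thesis by blast
next
  case Proj
  have "e = code (Proj (psnd e))" using Proj by (metis code.simps(3) prod_encode_pfst_psnd)
  moreover have "eval (Proj (psnd e)) (list_decode xs) y" using Proj by (simp add: enc_nth_eq_nth eval_Proj)
  ultimately show ?thesis by metis
next
  case Cn
  then show ?thesis
    using eval_justified_Cn_sound[OF mem] by blast
next
  case Pr0
  obtain f where "code f = pfst (psnd e)" "eval f (list_decode (enc_tl xs)) y"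
    using Pr0(4) mem by fastforce
  moreover obtain g where "code g = psnd (psnd e)"
    using Pr0(5) mem by (metis claim_holds_code_claim rangeE)
  moreover have "list_decode xs = 0 # list_decode (enc_tl xs)"
    using Pr0 list_decode_eq_enc_Cons by metis
  ultimately have "e = code (Pr f g)" "eval (Pr f g) (list_decode xs) y"
    using Pr0(1) by (auto intro: eval_Pr0, metis prod_encode_pfst_psnd)
  then show ?thesis by blast
next
  case PrS
  then show ?thesis
    using eval_justified_PrS_sound[OF mem] by blast
next
  case Mn
  then show ?thesis
    using eval_justified_Mn_sound[OF mem] by blast
qed

lemma claim_justified_sound:
  assumes mem: "\<And>w. mem w \<Longrightarrow> claim_holds w" and "claim_justified mem B v"
  shows "claim_holds v"
proof -
  consider "pfst v = 0" "code_justified mem (psnd v)"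
    | "pfst v = 1" "eval_justified mem B (pfst (psnd v)) (pfst (psnd (psnd v))) (psnd (psnd (psnd v)))"
    using assms(2) unfolding claim_justified_def by argo
  then show ?thesis
  proof cases
    case 1
    then show ?thesis using code_justified_sound[OF mem] unfolding claim_holds_def by simp
  next
    case 2
    then show ?thesis using eval_justified_sound[OF mem] unfolding claim_holds_def by simp
  qed
qed

lemma code_justified_mono:
  "code_justified mem e \<Longrightarrow> (\<And>w. mem w \<Longrightarrow> mem' w) \<Longrightarrow> code_justified mem' e"
  by (erule code_justified.cases) (auto intro: code_justified.intros)

lemma eval_justified_transfer:
  assumes "eval_justified mem B e xs y" and mem: "\<And>w. mem w \<Longrightarrow> mem' w \<and> w < B'"
  shows "eval_justified mem' B' e xs y"
  using assms(1)
proof cases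
  case (Cn ys)
  moreover have "ys < B'"
    using Cn(4) mem le_eval_claim(1) by (meson le_less_trans)
  ultimately show ?thesis
    using mem by (auto intro: eval_justified.Cn)
next
  case (PrS z)
  moreover have "z < B'"
    using PrS(5) mem le_eval_claim(2) by (meson le_less_trans)
  ultimately show ?thesis
    using mem by (auto intro: eval_justified.PrS)
next
  case Mn
  have "\<exists>z<B'. mem' (eval_claim (psnd e) (enc_cons m xs) (Suc z))" if "m < y" for m
  proof -
    obtain z where "mem (eval_claim (psnd e) (enc_cons m xs) (Suc z))"
      using Mn(3) \<open>m < y\<close> by blast
    moreover have "z < eval_claim (psnd e) (enc_cons m xs) (Suc z)"
      using le_eval_claim(2) by (simp add: Suc_le_lessD)
    ultimately show ?thesis
      using mem by (meson less_trans)
  qed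
  then show ?thesis
    using Mn mem by (auto intro: eval_justified.Mn)
qed (use mem in \<open>auto intro: eval_justified.intros\<close>)

lemma claim_justified_transfer:
  "claim_justified mem B v \<Longrightarrow> (\<And>w. mem w \<Longrightarrow> mem' w \<and> w < B') \<Longrightarrow> claim_justified mem' B' v"
  unfolding claim_justified_def
  using code_justified_mono[of mem _ mem'] eval_justified_transfer[of mem B _ _ _ mem' B'] by blast

(* Every claim of a certificate lies below its code (less_list_encode), so bounding the witnesses by
   the code of the certificate loses nothing. *)
definition valid_cert :: "nat list \<Rightarrow> bool" where
  "valid_cert L \<longleftrightarrow> (\<forall>i<length L. claim_justified (\<lambda>w. w \<in> set (take i L)) (list_encode L) (L ! i))"

lemma valid_cert_append:
  assumes "valid_cert L1" "valid_cert L2"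
  shows "valid_cert (L1 @ L2)"
  unfolding valid_cert_def
proof (intro allI impI)
  fix i
  assume i: "i < length (L1 @ L2)"
  have bound: "w < list_encode (L1 @ L2)" if "w \<in> set L1 \<or> w \<in> set L2" for w
    using that less_list_encode by auto
  show "claim_justified (\<lambda>w. w \<in> set (take i (L1 @ L2))) (list_encode (L1 @ L2)) ((L1 @ L2) ! i)"
  proof (cases "i < length L1")
    case True
    then have "claim_justified (\<lambda>w. w \<in> set (take i L1)) (list_encode L1) ((L1 @ L2) ! i)"
      using assms(1) unfolding valid_cert_def by (simp add: nth_append)
    then show ?thesis
      by (rule claim_justified_transfer) (use True bound in \<open>auto simp: nth_append dest: in_set_takeD\<close>)
  next
    case False
    define j where "j = i - length L1"
    then have "j < length L2" "i = length L1 + j"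
      using i False by auto
    then have "claim_justified (\<lambda>w. w \<in> set (take j L2)) (list_encode L2) ((L1 @ L2) ! i)"
      using assms(2) unfolding valid_cert_def by (simp add: nth_append)
    then show ?thesis
      by (rule claim_justified_transfer)
        (use \<open>i = length L1 + j\<close> bound in \<open>auto dest: in_set_takeD\<close>)
  qed
qed

lemma valid_cert_snoc:
  assumes "valid_cert L" "claim_justified mem B v" "\<And>w. mem w \<Longrightarrow> w \<in> set L"
  shows "valid_cert (L @ [v])"
  unfolding valid_cert_def
proof (intro allI impI)
  fix i
  assume "i < length (L @ [v])"
  then consider "i < length L" | "i = length L"
    by fastforce
  then show "claim_justified (\<lambda>w. w \<in> set (take i (L @ [v]))) (list_encode (L @ [v])) ((L @ [v]) ! i)"
  proof cases
    case 1
    then have "claim_justified (\<lambda>w. w \<in> set (take i L)) (list_encode L) ((L @ [v]) ! i)"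
      using assms(1) unfolding valid_cert_def by (simp add: nth_append)
    then show ?thesis
      by (rule claim_justified_transfer)
        (use 1 less_list_encode in \<open>auto simp: nth_append dest: in_set_takeD\<close>)
  next
    case 2
    then have "(L @ [v]) ! i = v"
      by simp
    show ?thesis
      unfolding \<open>(L @ [v]) ! i = v\<close> using assms(2)
      by (rule claim_justified_transfer) (use 2 assms(3) less_list_encode in auto)
  qed
qed

lemma valid_cert_sound:
  assumes L: "valid_cert L" and "v \<in> set L"
  shows "claim_holds v"
proof -
  have "claim_holds (L ! i)" if "i < length L" for i
    using that
  proof (induction i rule: less_induct)
    case (less i)
    have "claim_justified (\<lambda>w. w \<in> set (take i L)) (list_encode L) (L ! i)"
      using L less(2) unfolding valid_cert_def by blast
    then show ?case
      by (rule claim_justified_sound[rotated]) (use less in \<open>auto simp: in_set_conv_nth\<close>)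
  qed
  then show ?thesis
    using assms(2) by (auto simp: in_set_conv_nth)
qed

definition certified :: "nat \<Rightarrow> bool" where
  "certified v \<longleftrightarrow> (\<exists>L. valid_cert L \<and> v \<in> set L)"

lemma valid_cert_covering:
  assumes "finite V" "\<forall>v\<in>V. certified v"
  shows "\<exists>L. valid_cert L \<and> V \<subseteq> set L"
  using assms
proof (induction rule: finite_induct)
  case empty
  have "valid_cert []" by (simp add: valid_cert_def)
  then show ?case by blast
next
  case (insert v V)
  then obtain L1 L2 where "valid_cert L1" "V \<subseteq> set L1" "valid_cert L2" "v \<in> set L2"
    unfolding certified_def by auto
  then show ?case
    using valid_cert_append by (intro exI[of _ "L1 @ L2"]) auto
qed

lemma certifiedI:
  assumes "finite V" "\<forall>w\<in>V. certified w" "claim_justified (\<lambda>w. w \<in> V) B v"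
  shows "certified v"
proof -
  obtain L where "valid_cert L" "V \<subseteq> set L"
    using valid_cert_covering[OF assms(1,2)] by blast
  then have "valid_cert (L @ [v])"
    using assms(3) by (auto intro: valid_cert_snoc)
  then show ?thesis
    unfolding certified_def by auto
qed

lemma code_claim_certified: "certified (code_claim (code f))"
proof (induction f)
  case (Cn f gs)
  let ?V = "insert (code_claim (code f)) (code_claim ` code ` set gs)"
  have "code_justified (\<lambda>w. w \<in> ?V) (code (Cn f gs))"
    by (rule code_justified.Cn) auto
  then show ?case
    using Cn by (intro certifiedI[of ?V]) auto
next
  case (Pr f g)
  let ?V = "{code_claim (code f), code_claim (code g)}"
  have "code_justified (\<lambda>w. w \<in> ?V) (code (Pr f g))"
    by (rule code_justified.Pr) auto
  then show ?case
    using Pr by (intro certifiedI[of ?V]) auto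
next
  case (Mn f)
  have "code_justified (\<lambda>w. w \<in> {code_claim (code f)}) (code (Mn f))"
    by (rule code_justified.Mn) auto
  then show ?case
    using Mn by (intro certifiedI[of "{code_claim (code f)}"]) auto
qed (rule certifiedI[of "{}"], simp_all add: code_justified.intros)+

lemma eval_claim_certified_Cn:
  assumes "list_all2 (\<lambda>g y. certified (eval_claim (code g) (list_encode xs) y)) gs ys"
    and "certified (eval_claim (code f) (list_encode ys) z)"
  shows "certified (eval_claim (code (Cn f gs)) (list_encode xs) z)"
proof -
  let ?V = "insert (eval_claim (code f) (list_encode ys) z)
    ((\<lambda>k. eval_claim (code (gs ! k)) (list_encode xs) (ys ! k)) ` {..<length gs})"
  have len: "length ys = length gs"
    using assms(1) by (simp add: list_all2_lengthD)
  have "eval_justified (\<lambda>w. w \<in> ?V) (Suc (list_encode ys)) (code (Cn f gs)) (list_encode xs) z"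
    using len by (intro eval_justified.Cn[where ys = "list_encode ys"]) (auto simp: enc_nth_eq_nth)
  moreover have "\<forall>w\<in>?V. certified w"
    using assms by (auto simp: list_all2_conv_all_nth)
  ultimately show ?thesis
    by (intro certifiedI[of ?V]) simp_all
qed

lemma eval_claim_certified_Mn:
  assumes "certified (eval_claim (code f) (list_encode (n # xs)) 0)"
    and "\<forall>m<n. \<exists>y. certified (eval_claim (code f) (list_encode (m # xs)) (Suc y))"
  shows "certified (eval_claim (code (Mn f)) (list_encode xs) n)"
proof -
  obtain z where z: "\<forall>m<n. certified (eval_claim (code f) (list_encode (m # xs)) (Suc (z m)))"
    using assms(2) by metis
  let ?V = "insert (eval_claim (code f) (list_encode (n # xs)) 0)
    ((\<lambda>m. eval_claim (code f) (list_encode (m # xs)) (Suc (z m))) ` {..<n})"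
  have "z m < Suc (sum z {..<n})" if "m < n" for m
    using that by (simp add: le_imp_less_Suc member_le_sum)
  then have "eval_justified (\<lambda>w. w \<in> ?V) (Suc (sum z {..<n})) (code (Mn f)) (list_encode xs) n"
    by (intro eval_justified.Mn) (auto simp: enc_cons_def)
  then show ?thesis
    using assms(1) z by (intro certifiedI[of ?V]) simp_all
qed

lemma eval_claim_certified: "eval f xs y \<Longrightarrow> certified (eval_claim (code f) (list_encode xs) y)"
proof (induction rule: eval.induct)
  case (eval_Proj i xs)
  have "eval_justified (\<lambda>w. w \<in> {}) 0 (code (Proj i)) (list_encode xs) (xs ! i)"
    using eval_Proj by (intro eval_justified.Proj) (simp_all add: enc_nth_eq_nth)
  then show ?case
    by (intro certifiedI[of "{}"]) simp_all
next
  case (eval_Cn xs gs ys f z)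
  have "list_all2 (\<lambda>g y. certified (eval_claim (code g) (list_encode xs) y)) gs ys"
    using eval_Cn.IH(1) by (rule list_all2_mono) simp
  then show ?case
    using eval_Cn.IH(2) by (rule eval_claim_certified_Cn)
next
  case (eval_Pr0 f xs y g)
  let ?V = "{eval_claim (code f) (list_encode xs) y, code_claim (code g)}"
  have "eval_justified (\<lambda>w. w \<in> ?V) 0 (code (Pr f g)) (list_encode (0 # xs)) y"
    by (intro eval_justified.Pr0) simp_all
  then show ?case
    using eval_Pr0.IH code_claim_certified by (intro certifiedI[of ?V]) simp_all
next
  case (eval_PrS f g n xs y z)
  let ?V = "{eval_claim (code (Pr f g)) (list_encode (n # xs)) y,
    eval_claim (code g) (list_encode (n # y # xs)) z}"
  have "eval_justified (\<lambda>w. w \<in> ?V) (Suc y) (code (Pr f g)) (list_encode (Suc n # xs)) z"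
    by (intro eval_justified.PrS[where z = y]) (simp_all add: enc_cons_def)
  then show ?case
    using eval_PrS.IH by (intro certifiedI[of ?V]) simp_all
next
  case (eval_Mn f n xs)
  then show ?case
    using eval_claim_certified_Mn by blast
qed (rule certifiedI[of "{}"], simp_all add: eval_justified.intros)+

lemma valid_cert_list_decode_iff:
  "valid_cert (list_decode c) \<longleftrightarrow>
   (\<forall>i<length (list_decode c). claim_justified (\<lambda>w. w \<in> set (take i (list_decode c))) c (enc_nth c i))"
  by (simp add: valid_cert_def enc_nth_eq_nth)

lemma decidable_valid_cert [computable_intros]:
  assumes "computable k F"
  shows "decidable k (\<lambda>xs. valid_cert (list_decode (F xs)))"
proof -
  have "decidable 1 (\<lambda>ys. valid_cert (list_decode (ys ! 0)))"
    unfolding valid_cert_list_decode_iff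
    by (intro computable_intros decidable_comp3[OF decidable_claim_justified]) simp_all
  from decidable_comp1[OF this assms] show ?thesis .
qed

definition in_W_at :: "nat \<Rightarrow> nat \<Rightarrow> nat \<Rightarrow> bool" where
  "in_W_at t e x \<longleftrightarrow>
     (\<exists>c<t. valid_cert (list_decode c) \<and> (\<exists>y<c. eval_claim e (enc_cons x 0) y \<in> set (list_decode c)))"

lemma decidable_in_W_at [computable_intros]:
  "computable k T \<Longrightarrow> computable k E \<Longrightarrow> computable k X \<Longrightarrow>
   decidable k (\<lambda>xs. in_W_at (T xs) (E xs) (X xs))"
proof (rule decidable_comp3)
  show "decidable 3 (\<lambda>ys. in_W_at (ys ! 0) (ys ! 1) (ys ! 2))"
    unfolding in_W_at_def by (intro computable_intros; simp)
qed

lemma in_W_at_mono: "in_W_at t e x \<Longrightarrow> t \<le> t' \<Longrightarrow> in_W_at t' e x"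
  unfolding in_W_at_def by (meson less_le_trans)

lemma W_iff_in_W_at: "x \<in> W e \<longleftrightarrow> (\<exists>t. in_W_at t e x)"
proof
  assume "x \<in> W e"
  then obtain f y where "code f = e" "eval f [x] y"
    unfolding W_def by blast
  then obtain L where L: "valid_cert L" "eval_claim e (enc_cons x 0) y \<in> set L"
    using eval_claim_certified unfolding certified_def enc_cons_0 by blast
  moreover have "y < list_encode L"
    using le_eval_claim(2) less_list_encode[OF L(2)] by (rule le_less_trans)
  ultimately have "in_W_at (Suc (list_encode L)) e x"
    unfolding in_W_at_def by (intro exI[of _ "list_encode L"]) auto
  then show "\<exists>t. in_W_at t e x" ..
next
  assume "\<exists>t. in_W_at t e x"
  then obtain c y where "valid_cert (list_decode c)" "eval_claim e (enc_cons x 0) y \<in> set (list_decode c)"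
    unfolding in_W_at_def by blast
  then have "claim_holds (eval_claim e (list_encode [x]) y)"
    unfolding enc_cons_0 by (rule valid_cert_sound)
  then show "x \<in> W e"
    unfolding W_def by auto
qed

lemma in_W_at_less: "in_W_at t e x \<Longrightarrow> x < t"
proof -
  assume "in_W_at t e x"
  then obtain c y where "c < t" "eval_claim e (enc_cons x 0) y \<in> set (list_decode c)"
    unfolding in_W_at_def by blast
  then have "eval_claim e (enc_cons x 0) y < c"
    using less_list_encode[of _ "list_decode c"] by simp
  moreover have "x < enc_cons x 0"
    unfolding enc_cons_def using le_prod_encode_1 by (simp add: le_imp_less_Suc)
  ultimately show "x < t"
    using le_eval_claim(1) \<open>c < t\<close> by (meson le_less_trans less_trans)
qed

section \<open>Uniform c.e. indices\<close>

primrec const_prog :: "nat \<Rightarrow> recf" where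
  "const_prog 0 = Z"
| "const_prog (Suc a) = Cn S [const_prog a]"

lemma eval_const_prog: "eval (const_prog a) xs a"
proof (induction a)
  case (Suc a)
  then have "list_all2 (\<lambda>g y. eval g xs y) [const_prog a] [a]"
    by simp
  then show ?case
    using eval_S[of a "[]"] by (auto intro: eval_Cn)
qed (auto intro: eval_Z)

lemma computable_code_const_prog [computable_intros]:
  assumes "computable k F"
  shows "computable k (\<lambda>xs. code (const_prog (F xs)))"
proof -
  let ?step = "\<lambda>c. prod_encode (3, prod_encode (code S, enc_cons c 0))"
  have "computable 1 (\<lambda>ys. ?step (ys ! 0))"
    by (intro computable_intros) simp
  from computable_funpow[OF this assms computable_const]
  have "computable k (\<lambda>xs. (?step ^^ F xs) (code Z))" .
  moreover have "code (const_prog a) = (?step ^^ a) (code Z)" for a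
    by (induction a) (simp_all add: enc_cons_def)
  ultimately show ?thesis
    by simp
qed

lemma W_code: "W (code f) = {x. \<exists>y. eval f [x] y}"
  unfolding W_def using inj_code by (auto dest: injD)

lemma total_computable_if_computable:
  "computable 1 (\<lambda>ys. h (ys ! 0)) \<Longrightarrow> total_computable h"
  unfolding computable_def total_computable_def by (metis One_nat_def length_Cons list.size(3) nth_Cons_0)

(* The program searches for the least t with Q t w p, the parameter p being built into it as a
   constant. *)
lemma uniformly_ce:
  assumes "decidable 3 (\<lambda>ys. Q (ys ! 0) (ys ! 1) (ys ! 2))"
  shows "\<exists>h. total_computable h \<and> (\<forall>p. W (h p) = {w. \<exists>t. Q t w p})"
proof -
  obtain chi where chi: "\<forall>ys. length ys = 3 \<longrightarrow> eval chi ys (of_bool (\<not> Q (ys ! 0) (ys ! 1) (ys ! 2)))"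
    using decidable_not[OF assms] unfolding decidable_def computable_def by blast
  define f where "f p = Cn chi [Proj 0, Proj 1, const_prog p]" for p
  have f: "eval (f p) ys (of_bool (\<not> Q (ys ! 0) (ys ! 1) p))" if len: "length ys = 2" for ys p
  proof -
    obtain t w where ys: "ys = [t, w]"
      using len by (auto simp: length_Suc_conv numeral_2_eq_2)
    have "list_all2 (\<lambda>g y. eval g ys y) [Proj 0, Proj 1, const_prog p] [t, w, p]"
      using eval_Proj[of 0 ys] eval_Proj[of 1 ys] by (simp add: ys eval_const_prog)
    moreover have "eval chi [t, w, p] (of_bool (\<not> Q t w p))"
      using chi[rule_format, of "[t, w, p]"] by (simp add: numeral_3_eq_3)
    ultimately have "eval (Cn chi [Proj 0, Proj 1, const_prog p]) ys (of_bool (\<not> Q t w p))"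
      by (rule eval_Cn)
    then show ?thesis
      by (simp add: f_def ys)
  qed
  have "(\<exists>y. eval (Mn (f p)) [w] y) \<longleftrightarrow> (\<exists>t. Q t w p)" for p w
    using eval_Mn_iff_Least[of 1 "f p" "\<lambda>ys. of_bool (\<not> Q (ys ! 0) (ys ! 1) p)" "[w]"] f
    by auto
  then have "W (code (Mn (f p))) = {w. \<exists>t. Q t w p}" for p
    unfolding W_code by blast
  moreover have "total_computable (\<lambda>p. code (Mn (f p)))"
  proof (rule total_computable_if_computable)
    have "code (Mn (f p)) = prod_encode (5, prod_encode (3, prod_encode (code chi,
      enc_cons (code (Proj 0)) (enc_cons (code (Proj 1)) (enc_cons (code (const_prog p)) 0)))))" for p
      by (simp add: f_def enc_cons_def)
    then show "computable 1 (\<lambda>ys. code (Mn (f (ys ! 0))))"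
      by (simp only:) (intro computable_intros; simp)
  qed
  ultimately show ?thesis
    by blast
qed


lemma ce_if_decidable:
  assumes "decidable 2 (\<lambda>ys. Q (ys ! 0) (ys ! 1))"
  shows "ce {w. \<exists>t. Q t w}"
proof -
  have "decidable 3 (\<lambda>ys. Q (ys ! 0) (ys ! 1))"
    using decidable_comp2[OF assms computable_nth computable_nth] by simp
  then show ?thesis
    using uniformly_ce[of "\<lambda>t w p. Q t w"] unfolding ce_def by auto
qed

section \<open>The extended relation and its ideals\<close>

lemma ideal_nonempty: "is_ideal R I \<Longrightarrow> \<exists>a. a \<in> I"
  unfolding is_ideal_def by blast

lemma ideal_downward_closed: "is_ideal R I \<Longrightarrow> a \<in> I \<Longrightarrow> R b a \<Longrightarrow> b \<in> I"
  unfolding is_ideal_def by blast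

lemma ideal_directed: "is_ideal R I \<Longrightarrow> a \<in> I \<Longrightarrow> b \<in> I \<Longrightarrow> \<exists>c\<in>I. R a c \<and> R b c"
  unfolding is_ideal_def by blast

lemma ideal_upper: "is_ideal R I \<Longrightarrow> a \<in> I \<Longrightarrow> \<exists>c\<in>I. R a c"
  unfolding is_ideal_def by blast

lemma trans_relD: "trans_rel R \<Longrightarrow> R a b \<Longrightarrow> R b c \<Longrightarrow> R a c"
  unfolding trans_rel_def by blast

lemma ideal_finite_upper_bound:
  assumes I: "is_ideal R I" and R: "trans_rel R" and F: "finite F" "F \<subseteq> I"
  shows "\<exists>c\<in>I. \<forall>y\<in>F. R y c"
  using F
proof (induction F rule: finite_induct)
  case empty
  then show ?case using ideal_nonempty[OF I] by blast
next
  case (insert x F)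
  then obtain c where c: "c \<in> I" "\<forall>y\<in>F. R y c"
    by blast
  obtain d where "d \<in> I" "R x d" "R c d"
    using ideal_directed[OF I _ c(1), of x] insert.prems by blast
  then show ?case
    using c(2) trans_relD[OF R] by blast
qed

(* The elements of the new relation are the codes \<langle>0, n, s, K\<rangle> (avoiding elements) and
   \<langle>1, n, x\<rangle> (meeting elements), K being given as a list code. *)
abbreviation tag :: "nat \<Rightarrow> nat" where "tag z \<equiv> pfst z"
abbreviation node :: "nat \<Rightarrow> nat" where "node z \<equiv> pfst (psnd z)"
abbreviation stage :: "nat \<Rightarrow> nat" where "stage z \<equiv> pfst (psnd (psnd z))"
abbreviation support :: "nat \<Rightarrow> nat set" where "support z \<equiv> set (list_decode (psnd (psnd (psnd z))))"
abbreviation witness :: "nat \<Rightarrow> nat" where "witness z \<equiv> psnd (psnd z)"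

definition avoiding_elem :: "nat \<Rightarrow> nat \<Rightarrow> nat set \<Rightarrow> nat" where
  "avoiding_elem n s K = prod_encode (0, prod_encode (n, prod_encode (s, list_encode (sorted_list_of_set K))))"

definition meeting_elem :: "nat \<Rightarrow> nat \<Rightarrow> nat" where
  "meeting_elem n x = prod_encode (1, prod_encode (n, x))"

lemma avoiding_elem_simps [simp]:
  "tag (avoiding_elem n s K) = 0" "node (avoiding_elem n s K) = n" "stage (avoiding_elem n s K) = s"
  "finite K \<Longrightarrow> support (avoiding_elem n s K) = K"
  by (simp_all add: avoiding_elem_def)

lemma meeting_elem_simps [simp]:
  "tag (meeting_elem n x) = 1" "node (meeting_elem n x) = n" "witness (meeting_elem n x) = x"
  by (simp_all add: meeting_elem_def)

(* The bounds on x and y are implied by R_at_bound below; they make the condition decidable. *)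
definition admissible_at :: "(nat \<Rightarrow> nat \<Rightarrow> bool) \<Rightarrow> (nat \<Rightarrow> bool) \<Rightarrow> nat \<Rightarrow> nat \<Rightarrow> nat set \<Rightarrow> bool" where
  "admissible_at Rs Us s n K \<longleftrightarrow>
     (\<forall>y<s. \<forall>x<s. Rs x y \<longrightarrow> y \<in> insert n K \<longrightarrow> x \<in> K) \<and> \<not> Us n \<and> (\<forall>y\<in>K. \<not> Us y)"

(* With R and U for P and V this is the new relation; with the stage-t approximations of R and U it
   is a decidable approximation of it (ext_R_iff_stagewise). *)
definition ext_rel ::
  "(nat \<Rightarrow> nat \<Rightarrow> nat \<Rightarrow> bool) \<Rightarrow> (nat \<Rightarrow> nat \<Rightarrow> bool) \<Rightarrow> (nat \<Rightarrow> nat \<Rightarrow> bool) \<Rightarrow> (nat \<Rightarrow> bool) \<Rightarrow>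
   nat \<Rightarrow> nat \<Rightarrow> bool" where
  "ext_rel R_at U_at P V z z' \<longleftrightarrow>
     (tag z = 0 \<and> tag z' = 0 \<and> stage z < stage z' \<and> node z \<in> support z' \<and>
        (\<forall>y\<in>support z. y \<in> support z') \<and> (\<forall>y\<in>support z'. P y (node z')) \<and>
        admissible_at (R_at (stage z')) (U_at (stage z')) (stage z') (node z') (support z')) \<or>
     (tag z = 1 \<and> tag z' = 1 \<and> P (node z) (node z') \<and>
        V (witness z) \<and> P (witness z) (node z) \<and> V (witness z') \<and> P (witness z') (node z'))"

(* The pairs \<langle>n, m\<rangle> of basic sets witnessing that lower and lift are computable
   (lower_in_added_base_iff, mem_lift_iff). *)
definition lower_index :: "(nat \<Rightarrow> nat \<Rightarrow> bool) \<Rightarrow> nat \<Rightarrow> bool" where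
  "lower_index P w \<longleftrightarrow> P (pfst w div 2) (node (psnd w)) \<and> (odd (pfst w) \<longrightarrow> tag (psnd w) = 0)"

definition lift_index :: "(nat \<Rightarrow> nat \<Rightarrow> bool) \<Rightarrow> (nat \<Rightarrow> bool) \<Rightarrow> nat \<Rightarrow> bool" where
  "lift_index P V w \<longleftrightarrow>
     (tag (pfst w) = 0 \<and> odd (psnd w) \<and> P (node (pfst w)) (psnd w div 2) \<and>
        (\<forall>y\<in>support (pfst w). P y (psnd w div 2))) \<or>
     (tag (pfst w) = 1 \<and> psnd w = 2 * node (pfst w) \<and> V (witness (pfst w)) \<and> P (witness (pfst w)) (node (pfst w)))"

locale stagewise_approximation =
  fixes R :: "nat \<Rightarrow> nat \<Rightarrow> bool" and U :: "nat set"
    and R_at :: "nat \<Rightarrow> nat \<Rightarrow> nat \<Rightarrow> bool" and U_at :: "nat \<Rightarrow> nat \<Rightarrow> bool"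
  assumes R_iff_R_at: "R x y \<longleftrightarrow> (\<exists>t. R_at t x y)"
    and R_at_mono: "R_at t x y \<Longrightarrow> t \<le> t' \<Longrightarrow> R_at t' x y"
    and R_at_bound: "R_at t x y \<Longrightarrow> x < t \<and> y < t"
    and U_iff_U_at: "x \<in> U \<longleftrightarrow> (\<exists>t. U_at t x)"
    and U_at_mono: "U_at t x \<Longrightarrow> t \<le> t' \<Longrightarrow> U_at t' x"
begin

abbreviation ext_R :: "nat \<Rightarrow> nat \<Rightarrow> bool" where
  "ext_R \<equiv> ext_rel R_at U_at R (\<lambda>x. x \<in> U)"

lemma R_eventually: "R x y \<Longrightarrow> \<forall>\<^sub>F t in sequentially. R_at t x y"
  unfolding R_iff_R_at eventually_sequentially using R_at_mono by blast

lemma U_eventually: "x \<in> U \<Longrightarrow> \<forall>\<^sub>F t in sequentially. U_at t x"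
  unfolding U_iff_U_at eventually_sequentially using U_at_mono by blast

lemma ext_R_iff_stagewise: "ext_R z z' \<longleftrightarrow> (\<exists>t. ext_rel R_at U_at (R_at t) (U_at t) z z')"
proof
  assume "ext_R z z'"
  then consider
    "tag z = 0" "tag z' = 0" "stage z < stage z'" "node z \<in> support z'" "\<forall>y\<in>support z. y \<in> support z'"
      "\<forall>y\<in>support z'. R y (node z')"
      "admissible_at (R_at (stage z')) (U_at (stage z')) (stage z') (node z') (support z')"
    | "tag z = 1" "tag z' = 1" "R (node z) (node z')" "witness z \<in> U" "R (witness z) (node z)"
      "witness z' \<in> U" "R (witness z') (node z')"
    unfolding ext_rel_def by argo
  then have "\<forall>\<^sub>F t in sequentially. ext_rel R_at U_at (R_at t) (U_at t) z z'"
  proof cases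
    case 1
    have "\<forall>\<^sub>F t in sequentially. \<forall>y\<in>support z'. R_at t y (node z')"
      using 1(6) by (intro eventually_ball_finite) (auto intro: R_eventually)
    then show ?thesis
      by (rule eventually_mono) (use 1 in \<open>simp add: ext_rel_def\<close>)
  next
    case 2
    have "\<forall>\<^sub>F t in sequentially. R_at t (node z) (node z') \<and> U_at t (witness z) \<and>
        R_at t (witness z) (node z) \<and> U_at t (witness z') \<and> R_at t (witness z') (node z')"
      using 2 by (intro eventually_conj R_eventually U_eventually)
    then show ?thesis
      by (rule eventually_mono) (use 2 in \<open>simp add: ext_rel_def\<close>)
  qed
  then show "\<exists>t. ext_rel R_at U_at (R_at t) (U_at t) z z'"
    by (auto simp: eventually_sequentially)
next
  assume "\<exists>t. ext_rel R_at U_at (R_at t) (U_at t) z z'"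
  then show "ext_R z z'"
    unfolding ext_rel_def using R_iff_R_at U_iff_U_at by blast
qed

lemma lower_index_iff_stagewise: "lower_index R w \<longleftrightarrow> (\<exists>t. lower_index (R_at t) w)"
  unfolding lower_index_def R_iff_R_at by blast

lemma lift_index_iff_stagewise:
  "lift_index R (\<lambda>x. x \<in> U) w \<longleftrightarrow> (\<exists>t. lift_index (R_at t) (U_at t) w)"
proof
  assume "lift_index R (\<lambda>x. x \<in> U) w"
  then consider
    "tag (pfst w) = 0" "odd (psnd w)" "R (node (pfst w)) (psnd w div 2)"
      "\<forall>y\<in>support (pfst w). R y (psnd w div 2)"
    | "tag (pfst w) = 1" "psnd w = 2 * node (pfst w)" "witness (pfst w) \<in> U"
      "R (witness (pfst w)) (node (pfst w))"
    unfolding lift_index_def by argo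
  then have "\<forall>\<^sub>F t in sequentially. lift_index (R_at t) (U_at t) w"
  proof cases
    case 1
    have "\<forall>\<^sub>F t in sequentially. R_at t (node (pfst w)) (psnd w div 2) \<and>
        (\<forall>y\<in>support (pfst w). R_at t y (psnd w div 2))"
      using 1 by (intro eventually_conj eventually_ball_finite) (auto intro: R_eventually)
    then show ?thesis
      by (rule eventually_mono) (use 1 in \<open>simp add: lift_index_def\<close>)
  next
    case 2
    have "\<forall>\<^sub>F t in sequentially. U_at t (witness (pfst w)) \<and> R_at t (witness (pfst w)) (node (pfst w))"
      using 2 by (intro eventually_conj R_eventually U_eventually)
    then show ?thesis
      by (rule eventually_mono) (use 2 in \<open>simp add: lift_index_def\<close>)
  qed
  then show "\<exists>t. lift_index (R_at t) (U_at t) w"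
    by (auto simp: eventually_sequentially)
next
  assume "\<exists>t. lift_index (R_at t) (U_at t) w"
  then show "lift_index R (\<lambda>x. x \<in> U) w"
    unfolding lift_index_def using R_iff_R_at U_iff_U_at by blast
qed

end

locale ideal_extension = stagewise_approximation +
  assumes trans_R: "trans_rel R"
begin

lemma R_trans: "R a b \<Longrightarrow> R b c \<Longrightarrow> R a c"
  using trans_R by (rule trans_relD)

lemma trans_ext_R: "trans_rel ext_R"
  unfolding trans_rel_def ext_rel_def using R_trans by auto

lemma ext_R_tag: "ext_R z z' \<Longrightarrow> tag z = tag z'"
  unfolding ext_rel_def by auto

lemma ext_R_node: "ext_R z z' \<Longrightarrow> R (node z) (node z')"
  unfolding ext_rel_def by auto

lemma ideal_tag_cases:
  assumes J: "is_ideal ext_R J"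
  shows "(\<forall>z\<in>J. tag z = 0) \<or> (\<forall>z\<in>J. tag z = 1)"
proof -
  have "tag z = 0 \<or> tag z = 1" if "z \<in> J" for z
    using ideal_upper[OF J that] unfolding ext_rel_def by auto
  moreover have "tag z = tag z'" if "z \<in> J" "z' \<in> J" for z z'
    using ideal_directed[OF J that] ext_R_tag by metis
  ultimately show ?thesis
    by metis
qed

definition lower :: "nat set \<Rightarrow> nat set" where
  "lower J = {k. \<exists>z\<in>J. R k (node z)}"

lemma lower_ideal:
  assumes J: "is_ideal ext_R J"
  shows "is_ideal R (lower J)"
  unfolding is_ideal_def
proof (intro conjI ballI allI impI)
  obtain z z' where "z' \<in> J" "ext_R z z'"
    using ideal_nonempty[OF J] ideal_upper[OF J] by blast
  then show "lower J \<noteq> {}"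
    unfolding lower_def using ext_R_node by blast
next
  show "b \<in> lower J" if "a \<in> lower J" "R b a" for a b
    using that R_trans unfolding lower_def by blast
next
  fix a b
  assume "a \<in> lower J" "b \<in> lower J"
  then obtain z1 z2 where z: "z1 \<in> J" "R a (node z1)" "z2 \<in> J" "R b (node z2)"
    unfolding lower_def by blast
  obtain c where c: "c \<in> J" "ext_R z1 c" "ext_R z2 c"
    using ideal_directed[OF J z(1,3)] by blast
  obtain c' where "c' \<in> J" "ext_R c c'"
    using ideal_upper[OF J c(1)] by blast
  then have "node c \<in> lower J"
    unfolding lower_def using ext_R_node by blast
  moreover have "R a (node c)" "R b (node c)"
    using z c ext_R_node R_trans by blast+
  ultimately show "\<exists>c\<in>lower J. R a c \<and> R b c"
    by blast
qed

lemma stage_unbounded: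
  assumes J: "is_ideal ext_R J" and avoiding: "\<forall>z\<in>J. tag z = 0" and "z \<in> J"
  shows "\<exists>z'\<in>J. ext_R z z' \<and> T \<le> stage z'"
proof (induction T)
  case 0
  then show ?case using ideal_upper[OF J \<open>z \<in> J\<close>] by auto
next
  case (Suc T)
  then obtain z' where z': "z' \<in> J" "ext_R z z'" "T \<le> stage z'"
    by blast
  obtain z'' where z'': "z'' \<in> J" "ext_R z' z''"
    using ideal_upper[OF J z'(1)] by blast
  then have "stage z' < stage z''"
    using avoiding z'(1) unfolding ext_rel_def by auto
  then show ?case
    using z' z'' trans_relD[OF trans_ext_R] by (metis Suc_le_eq le_less_trans)
qed

lemma lower_avoids_U:
  assumes J: "is_ideal ext_R J" and avoiding: "\<forall>z\<in>J. tag z = 0"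
  shows "\<forall>x\<in>U. x \<notin> lower J"
proof (intro ballI notI)
  fix x
  assume "x \<in> U" "x \<in> lower J"
  then obtain z t1 t2 where z: "z \<in> J" "R_at t1 x (node z)" "U_at t2 x"
    unfolding lower_def R_iff_R_at U_iff_U_at by blast
  obtain z' where z': "z' \<in> J" "ext_R z z'" "max t1 t2 \<le> stage z'"
    using stage_unbounded[OF J avoiding z(1)] by blast
  have "node z \<in> support z'"
    "admissible_at (R_at (stage z')) (U_at (stage z')) (stage z') (node z') (support z')"
    using z'(2) avoiding z(1) unfolding ext_rel_def by auto
  moreover have "R_at (stage z') x (node z)" "U_at (stage z') x"
    using R_at_mono[OF z(2)] U_at_mono[OF z(3)] z'(3) by auto
  ultimately show False
    using R_at_bound unfolding admissible_at_def by blast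
qed

lemma lower_meets_U:
  assumes J: "is_ideal ext_R J" and meeting: "\<forall>z\<in>J. tag z = 1"
  shows "\<exists>x\<in>U. x \<in> lower J"
proof -
  obtain z z' where "z \<in> J" "ext_R z z'"
    using ideal_nonempty[OF J] ideal_upper[OF J] by blast
  then have "witness z \<in> U" "R (witness z) (node z)"
    using meeting unfolding ext_rel_def by auto
  then show ?thesis
    unfolding lower_def using \<open>z \<in> J\<close> by blast
qed

definition lift_avoiding :: "nat set \<Rightarrow> nat set" where
  "lift_avoiding I = {z. tag z = 0 \<and> node z \<in> I \<and> support z \<subseteq> I}"

definition lift_meeting :: "nat set \<Rightarrow> nat set" where
  "lift_meeting I = {z. tag z = 1 \<and> node z \<in> I \<and> witness z \<in> U \<and> R (witness z) (node z)}"

definition lift :: "nat set \<Rightarrow> nat set" where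
  "lift I = (if \<forall>x\<in>U. x \<notin> I then lift_avoiding I else lift_meeting I)"

(* The finitely many elements of insert (node z) (support z) lie below nodes of elements of J; above a
   common upper bound in J there are elements of arbitrarily large stage, and closedness of their
   supports makes them bound z as well. *)
lemma lift_avoiding_lower_subset:
  assumes J: "is_ideal ext_R J" and avoiding: "\<forall>z\<in>J. tag z = 0"
    and z: "z \<in> lift_avoiding (lower J)"
  shows "z \<in> J"
proof -
  let ?F = "insert (node z) (support z)"
  have "\<forall>y\<in>?F. \<exists>w\<in>J. R y (node w)"
    using z unfolding lift_avoiding_def lower_def by auto
  then obtain w where w: "\<forall>y\<in>?F. w y \<in> J \<and> R y (node (w y))"
    by metis
  obtain d where d: "d \<in> J" "\<forall>y\<in>?F. ext_R (w y) d"
    using ideal_finite_upper_bound[OF J trans_ext_R, of "w ` ?F"] w by auto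
  have "\<forall>\<^sub>F t in sequentially. \<forall>y\<in>?F. R_at t y (node (w y))"
    using w by (intro eventually_ball_finite) (auto intro: R_eventually)
  then obtain T where T: "\<forall>t\<ge>T. \<forall>y\<in>?F. R_at t y (node (w y))"
    unfolding eventually_sequentially by blast
  obtain d' where d': "d' \<in> J" "ext_R d d'" "max T (Suc (stage z)) \<le> stage d'"
    using stage_unbounded[OF J avoiding d(1)] by blast
  have d'_props: "tag d' = 0" "support d \<subseteq> support d'" "\<forall>y\<in>support d'. R y (node d')"
    "admissible_at (R_at (stage d')) (U_at (stage d')) (stage d') (node d') (support d')"
    using d'(2) avoiding d(1) unfolding ext_rel_def by auto
  have "y \<in> support d'" if y: "y \<in> ?F" for y
  proof -
    have "node (w y) \<in> support d'"
      using d(2) y avoiding w d'_props(2) unfolding ext_rel_def by auto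
    moreover have "R_at (stage d') y (node (w y))"
      using T d'(3) y by auto
    ultimately show ?thesis
      using d'_props(4) R_at_bound unfolding admissible_at_def by blast
  qed
  then have "ext_R z d'"
    using z d'(3) d'_props unfolding ext_rel_def lift_avoiding_def by auto
  then show "z \<in> J"
    using ideal_downward_closed[OF J d'(1)] by blast
qed

lemma lift_avoiding_lower:
  assumes J: "is_ideal ext_R J" and avoiding: "\<forall>z\<in>J. tag z = 0"
  shows "lift_avoiding (lower J) = J"
proof
  show "J \<subseteq> lift_avoiding (lower J)"
  proof
    fix z
    assume z: "z \<in> J"
    obtain z' where "z' \<in> J" "ext_R z z'"
      using ideal_upper[OF J z] by blast
    moreover have "node z \<in> support z'" "support z \<subseteq> support z'" "\<forall>y\<in>support z'. R y (node z')"
      using calculation(2) avoiding z unfolding ext_rel_def by auto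
    ultimately show "z \<in> lift_avoiding (lower J)"
      using avoiding z unfolding lift_avoiding_def lower_def by blast
  qed
next
  show "lift_avoiding (lower J) \<subseteq> J"
    using lift_avoiding_lower_subset[OF J avoiding] by blast
qed

lemma lift_meeting_lower:
  assumes J: "is_ideal ext_R J" and meeting: "\<forall>z\<in>J. tag z = 1"
  shows "lift_meeting (lower J) = J"
proof
  show "J \<subseteq> lift_meeting (lower J)"
  proof
    fix z
    assume z: "z \<in> J"
    obtain z' where "z' \<in> J" "ext_R z z'"
      using ideal_upper[OF J z] by blast
    moreover have "witness z \<in> U" "R (witness z) (node z)" "R (node z) (node z')"
      using calculation(2) meeting z unfolding ext_rel_def by auto
    ultimately show "z \<in> lift_meeting (lower J)"
      using meeting z unfolding lift_meeting_def lower_def by blast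
  qed
next
  show "lift_meeting (lower J) \<subseteq> J"
  proof
    fix z
    assume z: "z \<in> lift_meeting (lower J)"
    then obtain w where w: "w \<in> J" "R (node z) (node w)"
      unfolding lift_meeting_def lower_def by blast
    obtain w' where "ext_R w w'"
      using ideal_upper[OF J w(1)] by blast
    then have "witness w \<in> U" "R (witness w) (node w)"
      using meeting w(1) unfolding ext_rel_def by auto
    then have "ext_R z w"
      using z w meeting unfolding ext_rel_def lift_meeting_def by auto
    then show "z \<in> J"
      using ideal_downward_closed[OF J w(1)] by blast
  qed
qed

lemma lift_lower: "is_ideal ext_R J \<Longrightarrow> lift (lower J) = J"
  using ideal_tag_cases[of J] lower_avoids_U lower_meets_U lift_avoiding_lower lift_meeting_lower
  unfolding lift_def by metis

lemma R_at_tranclp: "(R_at s)\<^sup>+\<^sup>+ x y \<Longrightarrow> x < s \<and> R x y"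
  by (induction rule: tranclp_induct) (use R_at_bound R_iff_R_at R_trans in blast)+

lemma admissible_support_exists:
  assumes I: "is_ideal R I" and avoids: "\<forall>x\<in>U. x \<notin> I" and c: "c \<in> I"
    and F: "finite F" "\<forall>y\<in>F. R y c"
  shows "\<exists>K. finite K \<and> F \<subseteq> K \<and> (\<forall>y\<in>K. R y c) \<and> admissible_at (R_at s) (U_at s) s c K"
proof -
  define K where "K = F \<union> {x. \<exists>y\<in>insert c F. (R_at s)\<^sup>+\<^sup>+ x y}"
  have "K \<subseteq> F \<union> {..<s}"
    unfolding K_def using R_at_tranclp by blast
  then have "finite K"
    using F(1) finite_subset by blast
  moreover have "F \<subseteq> K"
    unfolding K_def by blast
  moreover have K_below: "\<forall>y\<in>K. R y c"
    unfolding K_def using F(2) R_at_tranclp R_trans by blast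
  moreover have "\<forall>y<s. \<forall>x<s. R_at s x y \<longrightarrow> y \<in> insert c K \<longrightarrow> x \<in> K"
  proof (intro allI impI)
    fix y x
    assume "y < s" "x < s" and xy: "R_at s x y" and y: "y \<in> insert c K"
    from y consider "y \<in> insert c F" | y' where "y' \<in> insert c F" "(R_at s)\<^sup>+\<^sup>+ y y'"
      unfolding K_def by blast
    then show "x \<in> K"
    proof cases
      case 1
      then show ?thesis
        using tranclp.r_into_trancl[of "R_at s", OF xy] unfolding K_def by blast
    next
      case 2
      then show ?thesis
        using tranclp_into_tranclp2[OF xy 2(2)] unfolding K_def by blast
    qed
  qed
  moreover have "\<forall>y\<in>insert c K. \<not> U_at s y"
  proof
    fix y
    assume "y \<in> insert c K"
    then have "y \<in> I"
      using K_below c ideal_downward_closed[OF I] by blast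
    then show "\<not> U_at s y"
      using avoids U_iff_U_at by blast
  qed
  ultimately show ?thesis
    unfolding admissible_at_def by (intro exI[of _ K]) blast
qed

lemma lift_avoiding_ideal:
  assumes I: "is_ideal R I" and avoids: "\<forall>x\<in>U. x \<notin> I"
  shows "is_ideal ext_R (lift_avoiding I)"
  unfolding is_ideal_def
proof (intro conjI ballI allI impI)
  obtain n where "n \<in> I"
    using ideal_nonempty[OF I] by blast
  then have "avoiding_elem n 0 {} \<in> lift_avoiding I"
    unfolding lift_avoiding_def by simp
  then show "lift_avoiding I \<noteq> {}"
    by blast
next
  fix a b
  assume a: "a \<in> lift_avoiding I" and "ext_R b a"
  then have "tag b = 0" "node b \<in> support a" "support b \<subseteq> support a" "\<forall>y\<in>support a. R y (node a)"
    unfolding lift_avoiding_def ext_rel_def by auto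
  then show "b \<in> lift_avoiding I"
    using a ideal_downward_closed[OF I] unfolding lift_avoiding_def by blast
next
  fix z1 z2
  assume z: "z1 \<in> lift_avoiding I" "z2 \<in> lift_avoiding I"
  let ?F = "{node z1, node z2} \<union> support z1 \<union> support z2"
  obtain c where c: "c \<in> I" "\<forall>y\<in>?F. R y c"
    using ideal_finite_upper_bound[OF I trans_R, of ?F] z unfolding lift_avoiding_def by auto
  define s where "s = Suc (max (stage z1) (stage z2))"
  obtain K where K: "finite K" "?F \<subseteq> K" "\<forall>y\<in>K. R y c" "admissible_at (R_at s) (U_at s) s c K"
    using admissible_support_exists[OF I avoids c(1), of ?F s] c(2) by auto
  let ?z = "avoiding_elem c s K"
  have "?z \<in> lift_avoiding I"
    using K c(1) ideal_downward_closed[OF I] unfolding lift_avoiding_def by auto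
  moreover have "ext_R z1 ?z" "ext_R z2 ?z"
    using z K unfolding ext_rel_def lift_avoiding_def s_def by auto
  ultimately show "\<exists>c\<in>lift_avoiding I. ext_R z1 c \<and> ext_R z2 c"
    by blast
qed

lemma lift_meeting_ideal:
  assumes I: "is_ideal R I" and meets: "\<exists>x\<in>U. x \<in> I"
  shows "is_ideal ext_R (lift_meeting I)"
  unfolding is_ideal_def
proof (intro conjI ballI allI impI)
  obtain x c where "x \<in> U" "x \<in> I" "c \<in> I" "R x c"
    using meets ideal_upper[OF I] by blast
  then have "meeting_elem c x \<in> lift_meeting I"
    unfolding lift_meeting_def by simp
  then show "lift_meeting I \<noteq> {}"
    by blast
next
  fix a b
  assume a: "a \<in> lift_meeting I" and "ext_R b a"
  then have "tag b = 1" "R (node b) (node a)" "witness b \<in> U" "R (witness b) (node b)"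
    unfolding lift_meeting_def ext_rel_def by auto
  then show "b \<in> lift_meeting I"
    using a ideal_downward_closed[OF I] unfolding lift_meeting_def by blast
next
  fix z1 z2
  assume z: "z1 \<in> lift_meeting I" "z2 \<in> lift_meeting I"
  then obtain c where c: "c \<in> I" "R (node z1) c" "R (node z2) c"
    using ideal_directed[OF I] unfolding lift_meeting_def by blast
  let ?z = "meeting_elem c (witness z1)"
  have "?z \<in> lift_meeting I" "ext_R z1 ?z" "ext_R z2 ?z"
    using z c R_trans unfolding lift_meeting_def ext_rel_def by auto
  then show "\<exists>c\<in>lift_meeting I. ext_R z1 c \<and> ext_R z2 c"
    by blast
qed

lemma lift_ideal: "is_ideal R I \<Longrightarrow> is_ideal ext_R (lift I)"
  unfolding lift_def using lift_avoiding_ideal lift_meeting_ideal by auto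

lemma lower_lift:
  assumes I: "is_ideal R I"
  shows "lower (lift I) = I"
proof
  show "lower (lift I) \<subseteq> I"
    using ideal_downward_closed[OF I]
    unfolding lower_def lift_def lift_avoiding_def lift_meeting_def by (auto split: if_splits)
next
  show "I \<subseteq> lower (lift I)"
  proof
    fix k
    assume k: "k \<in> I"
    show "k \<in> lower (lift I)"
    proof (cases "\<forall>x\<in>U. x \<notin> I")
      case True
      obtain c where "c \<in> I" "R k c"
        using ideal_upper[OF I k] by blast
      then have "avoiding_elem c 0 {} \<in> lift I" "R k (node (avoiding_elem c 0 {}))"
        using True unfolding lift_def lift_avoiding_def by simp_all
      then show ?thesis
        unfolding lower_def by blast
    next
      case False
      then obtain x where x: "x \<in> U" "x \<in> I"
        by blast
      obtain c where "c \<in> I" "R k c" "R x c"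
        using ideal_directed[OF I k x(2)] by blast
      then have "meeting_elem c x \<in> lift I" "R k (node (meeting_elem c x))"
        using False x unfolding lift_def lift_meeting_def by auto
      then show ?thesis
        unfolding lower_def by blast
    qed
  qed
qed

abbreviation A :: "nat set set" where
  "A \<equiv> avoid_set R U"

lemma lower_avoids_U_iff:
  assumes J: "is_ideal ext_R J"
  shows "(\<forall>x\<in>U. x \<notin> lower J) \<longleftrightarrow> (\<forall>z\<in>J. tag z = 0)"
  using lower_avoids_U[OF J] lower_meets_U[OF J] ideal_tag_cases[OF J] by fastforce

lemma lower_in_added_base_iff:
  assumes J: "is_ideal ext_R J"
  shows "lower J \<in> added_base R A n \<longleftrightarrow> (\<exists>m\<in>J. lower_index R (prod_encode (n, m)))"
proof -
  have "lower J \<in> Ideals R"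
    using lower_ideal[OF J] by (simp add: Ideals_def)
  then have "lower J \<in> added_base R A n \<longleftrightarrow>
      (odd n \<longrightarrow> (\<forall>z\<in>J. tag z = 0)) \<and> (\<exists>m\<in>J. R (n div 2) (node m))"
    unfolding added_base_def ideal_base_def avoid_set_def lower_avoids_U_iff[OF J, symmetric]
    by (simp add: lower_def)
  also have "\<dots> \<longleftrightarrow> (\<exists>m\<in>J. R (n div 2) (node m) \<and> (odd n \<longrightarrow> tag m = 0))"
    using ideal_tag_cases[OF J] by force
  finally show ?thesis
    unfolding lower_index_def by simp
qed

lemma lift_index_avoiding_elem:
  "tag m = 0 \<Longrightarrow>
   lift_index P V (prod_encode (m, i)) \<longleftrightarrow> odd i \<and> P (node m) (i div 2) \<and> (\<forall>y\<in>support m. P y (i div 2))"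
  by (simp add: lift_index_def)

lemma lift_index_meeting_elem:
  "tag m = 1 \<Longrightarrow>
   lift_index P V (prod_encode (m, i)) \<longleftrightarrow> i = 2 * node m \<and> V (witness m) \<and> P (witness m) (node m)"
  by (simp add: lift_index_def)

lemma mem_lift_iff:
  assumes I: "is_ideal R I"
  shows "m \<in> lift I \<longleftrightarrow> (\<exists>i. lift_index R (\<lambda>x. x \<in> U) (prod_encode (m, i)) \<and> I \<in> added_base R A i)"
proof -
  have ideal: "I \<in> Ideals R"
    using I by (simp add: Ideals_def)
  consider "tag m = 0" | "tag m = 1" | "tag m \<noteq> 0" "tag m \<noteq> 1"
    by blast
  then show ?thesis
  proof cases
    case 1
    have "m \<in> lift I \<longleftrightarrow> (\<forall>x\<in>U. x \<notin> I) \<and> insert (node m) (support m) \<subseteq> I"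
      using 1 unfolding lift_def lift_avoiding_def lift_meeting_def by auto
    also have "\<dots> \<longleftrightarrow> (\<forall>x\<in>U. x \<notin> I) \<and> (\<exists>c\<in>I. \<forall>y\<in>insert (node m) (support m). R y c)"
      using ideal_finite_upper_bound[OF I trans_R, of "insert (node m) (support m)"]
        ideal_downward_closed[OF I] by blast
    also have "\<dots> \<longleftrightarrow> (\<exists>i. odd i \<and> (\<forall>y\<in>insert (node m) (support m). R y (i div 2)) \<and>
        I \<in> added_base R A i)"
    proof
      assume "(\<forall>x\<in>U. x \<notin> I) \<and> (\<exists>c\<in>I. \<forall>y\<in>insert (node m) (support m). R y c)"
      then obtain c where "\<forall>x\<in>U. x \<notin> I" "c \<in> I" "\<forall>y\<in>insert (node m) (support m). R y c"
        by blast
      then show "\<exists>i. odd i \<and> (\<forall>y\<in>insert (node m) (support m). R y (i div 2)) \<and> I \<in> added_base R A i"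
        using ideal by (intro exI[of _ "2 * c + 1"]) (simp add: added_base_def ideal_base_def avoid_set_def)
    qed (auto simp: added_base_def ideal_base_def avoid_set_def)
    finally show ?thesis
      using 1 by (simp add: lift_index_avoiding_elem)
  next
    case 2
    have "m \<in> lift I \<longleftrightarrow> node m \<in> I \<and> witness m \<in> U \<and> R (witness m) (node m)"
      using 2 ideal_downward_closed[OF I] unfolding lift_def lift_avoiding_def lift_meeting_def by auto
    then show ?thesis
      using 2 ideal by (auto simp: lift_index_meeting_elem added_base_def ideal_base_def)
  next
    case 3
    then show ?thesis
      unfolding lift_def lift_avoiding_def lift_meeting_def lift_index_def by auto
  qed
qed

lemma computable_map_lower:
  assumes "ce {w. lower_index R w}"
  shows "computable_map (Ideals ext_R) (ideal_base ext_R) (Ideals R) (added_base R A) lower"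
  unfolding computable_map_def
proof (intro conjI exI[of _ "{w. lower_index R w}"] allI)
  show "lower ` Ideals ext_R \<subseteq> Ideals R"
    using lower_ideal by (auto simp: Ideals_def)
  show "{J \<in> Ideals ext_R. lower J \<in> added_base R A n} =
      \<Union> {ideal_base ext_R m |m. prod_encode (n, m) \<in> {w. lower_index R w}}" for n
  proof (intro set_eqI iffI)
    fix J
    assume "J \<in> {J \<in> Ideals ext_R. lower J \<in> added_base R A n}"
    then have "is_ideal ext_R J" "lower J \<in> added_base R A n"
      by (simp_all add: Ideals_def)
    then obtain m where "is_ideal ext_R J" "m \<in> J" "lower_index R (prod_encode (n, m))"
      using lower_in_added_base_iff by blast
    then show "J \<in> \<Union> {ideal_base ext_R m |m. prod_encode (n, m) \<in> {w. lower_index R w}}"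
      unfolding ideal_base_def Ideals_def by blast
  next
    fix J
    assume "J \<in> \<Union> {ideal_base ext_R m |m. prod_encode (n, m) \<in> {w. lower_index R w}}"
    then obtain m where "is_ideal ext_R J" "m \<in> J" "lower_index R (prod_encode (n, m))"
      unfolding ideal_base_def Ideals_def by blast
    then show "J \<in> {J \<in> Ideals ext_R. lower J \<in> added_base R A n}"
      using lower_in_added_base_iff[of J n] by (auto simp: Ideals_def)
  qed
qed (rule assms)

lemma computable_map_lift:
  assumes "ce {w. lift_index R (\<lambda>x. x \<in> U) w}"
  shows "computable_map (Ideals R) (added_base R A) (Ideals ext_R) (ideal_base ext_R) lift"
  unfolding computable_map_def
proof (intro conjI exI[of _ "{w. lift_index R (\<lambda>x. x \<in> U) w}"] allI)
  show "lift ` Ideals R \<subseteq> Ideals ext_R"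
    using lift_ideal by (auto simp: Ideals_def)
  show "{I \<in> Ideals R. lift I \<in> ideal_base ext_R m} =
      \<Union> {added_base R A i |i. prod_encode (m, i) \<in> {w. lift_index R (\<lambda>x. x \<in> U) w}}" for m
  proof (intro set_eqI iffI)
    fix I
    assume "I \<in> {I \<in> Ideals R. lift I \<in> ideal_base ext_R m}"
    then have "is_ideal R I" "m \<in> lift I"
      by (auto simp: Ideals_def ideal_base_def)
    then show "I \<in> \<Union> {added_base R A i |i. prod_encode (m, i) \<in> {w. lift_index R (\<lambda>x. x \<in> U) w}}"
      using mem_lift_iff[of I m] by blast
  next
    fix I
    assume "I \<in> \<Union> {added_base R A i |i. prod_encode (m, i) \<in> {w. lift_index R (\<lambda>x. x \<in> U) w}}"
    then obtain i where i: "lift_index R (\<lambda>x. x \<in> U) (prod_encode (m, i))" "I \<in> added_base R A i"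
      by blast
    then have "is_ideal R I"
      unfolding added_base_def ideal_base_def Ideals_def by (auto split: if_splits)
    then show "I \<in> {I \<in> Ideals R. lift I \<in> ideal_base ext_R m}"
      using i mem_lift_iff[of I m] lift_ideal[of I] by (auto simp: Ideals_def ideal_base_def)
  qed
qed (rule assms)

lemma computably_homeomorphic_ext_R:
  assumes "ce {w. lower_index R w}" "ce {w. lift_index R (\<lambda>x. x \<in> U) w}"
  shows "computably_homeomorphic (Ideals ext_R) (ideal_base ext_R) (Ideals R) (added_base R A)"
  unfolding computably_homeomorphic_def
proof (intro exI conjI)
  show "computable_map (Ideals ext_R) (ideal_base ext_R) (Ideals R) (added_base R A) lower"
    using assms(1) by (rule computable_map_lower)
  show "computable_map (Ideals R) (added_base R A) (Ideals ext_R) (ideal_base ext_R) lift"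
    using assms(2) by (rule computable_map_lift)
  show "\<forall>J\<in>Ideals ext_R. lift (lower J) = J"
    using lift_lower by (simp add: Ideals_def)
  show "\<forall>I\<in>Ideals R. lower (lift I) = I"
    using lower_lift by (simp add: Ideals_def)
qed

end

section \<open>Effectiveness of the construction\<close>

lemma stagewise_approximation_W:
  "stagewise_approximation (ce_rel a) (W u) (\<lambda>t x y. in_W_at t a (prod_encode (x, y))) (\<lambda>t. in_W_at t u)"
proof
  show "ce_rel a x y \<longleftrightarrow> (\<exists>t. in_W_at t a (prod_encode (x, y)))" for x y
    unfolding ce_rel_def by (rule W_iff_in_W_at)
  show "x \<in> W u \<longleftrightarrow> (\<exists>t. in_W_at t u x)" for x
    by (rule W_iff_in_W_at)
  show "x < t \<and> y < t" if "in_W_at t a (prod_encode (x, y))" for t x y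
    using in_W_at_less[OF that] le_prod_encode_1[of x y] le_prod_encode_2[of y x] by linarith
qed (auto intro: in_W_at_mono)

lemma ce_lower_index_W: "ce {w. lower_index (ce_rel a) w}"
proof -
  have "decidable 2 (\<lambda>ys. lower_index (\<lambda>x y. in_W_at (ys ! 0) a (prod_encode (x, y))) (ys ! 1))"
    unfolding lower_index_def by (intro computable_intros; simp)
  then have "ce {w. \<exists>t. lower_index (\<lambda>x y. in_W_at t a (prod_encode (x, y))) w}"
    by (rule ce_if_decidable)
  then show ?thesis
    using stagewise_approximation.lower_index_iff_stagewise[OF stagewise_approximation_W] by simp
qed

lemma ce_lift_index_W: "ce {w. lift_index (ce_rel a) (\<lambda>x. x \<in> W u) w}"
proof -
  have "decidable 2 (\<lambda>ys. lift_index (\<lambda>x y. in_W_at (ys ! 0) a (prod_encode (x, y))) (in_W_at (ys ! 0) u) (ys ! 1))"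
    unfolding lift_index_def by (intro computable_intros; simp)
  then have "ce {w. \<exists>t. lift_index (\<lambda>x y. in_W_at t a (prod_encode (x, y))) (in_W_at t u) w}"
    by (rule ce_if_decidable)
  then show ?thesis
    using stagewise_approximation.lift_index_iff_stagewise[OF stagewise_approximation_W] by simp
qed

lemma ext_rel_W_uniform_index:
  obtains h where "total_computable h"
    and "\<And>a u. ce_rel (h (prod_encode (a, u))) =
      ext_rel (\<lambda>t x y. in_W_at t a (prod_encode (x, y))) (\<lambda>t. in_W_at t u) (ce_rel a) (\<lambda>x. x \<in> W u)"
proof -
  let ?Q = "\<lambda>t w p. ext_rel (\<lambda>s x y. in_W_at s (pfst p) (prod_encode (x, y))) (\<lambda>s. in_W_at s (psnd p))
    (\<lambda>x y. in_W_at t (pfst p) (prod_encode (x, y))) (in_W_at t (psnd p)) (pfst w) (psnd w)"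
  have "decidable 3 (\<lambda>ys. ?Q (ys ! 0) (ys ! 1) (ys ! 2))"
    unfolding ext_rel_def admissible_at_def by (intro computable_intros; simp)
  then obtain h where "total_computable h" and h: "\<And>p. W (h p) = {w. \<exists>t. ?Q t w p}"
    using uniformly_ce[of ?Q] by blast
  moreover have "ce_rel (h (prod_encode (a, u))) =
      ext_rel (\<lambda>t x y. in_W_at t a (prod_encode (x, y))) (\<lambda>t. in_W_at t u) (ce_rel a) (\<lambda>x. x \<in> W u)" for a u
  proof (intro ext)
    fix x y
    have "ce_rel (h (prod_encode (a, u))) x y \<longleftrightarrow> (\<exists>t. ?Q t (prod_encode (x, y)) (prod_encode (a, u)))"
      by (simp add: ce_rel_def h)
    also have "\<dots> \<longleftrightarrow>
        ext_rel (\<lambda>t x y. in_W_at t a (prod_encode (x, y))) (\<lambda>t. in_W_at t u) (ce_rel a) (\<lambda>x. x \<in> W u) x y"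
      using stagewise_approximation.ext_R_iff_stagewise[OF stagewise_approximation_W] by simp
    finally show "ce_rel (h (prod_encode (a, u))) x y \<longleftrightarrow>
        ext_rel (\<lambda>t x y. in_W_at t a (prod_encode (x, y))) (\<lambda>t. in_W_at t u) (ce_rel a) (\<lambda>x. x \<in> W u) x y" .
  qed
  ultimately show ?thesis
    using that by blast
qed

theorem theorem4:
  shows "\<exists>h. total_computable h \<and>
    (\<forall>a u. trans_rel (ce_rel a) \<longrightarrow>
       (let b = h (prod_encode (a, u)) in
          trans_rel (ce_rel b) \<and>
          computably_homeomorphic
            (Ideals (ce_rel b)) (ideal_base (ce_rel b))
            (Ideals (ce_rel a)) (added_base (ce_rel a) (avoid_set (ce_rel a) (W u)))))"
proof -
  obtain h where h: "total_computable h"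
    "\<And>a u. ce_rel (h (prod_encode (a, u))) =
      ext_rel (\<lambda>t x y. in_W_at t a (prod_encode (x, y))) (\<lambda>t. in_W_at t u) (ce_rel a) (\<lambda>x. x \<in> W u)"
    using ext_rel_W_uniform_index by blast
  have "trans_rel (ce_rel b) \<and> computably_homeomorphic (Ideals (ce_rel b)) (ideal_base (ce_rel b))
      (Ideals (ce_rel a)) (added_base (ce_rel a) (avoid_set (ce_rel a) (W u)))"
    if "trans_rel (ce_rel a)" "b = h (prod_encode (a, u))" for a u b
  proof -
    interpret ideal_extension "ce_rel a" "W u" "\<lambda>t x y. in_W_at t a (prod_encode (x, y))" "\<lambda>t. in_W_at t u"
      using stagewise_approximation_W that(1) by (simp add: ideal_extension_def ideal_extension_axioms_def)
    show ?thesis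
      using trans_ext_R computably_homeomorphic_ext_R[OF ce_lower_index_W ce_lift_index_W]
      unfolding that(2) h(2) by blast
  qed
  with h(1) show ?thesis
    by (auto simp: Let_def)
qed

end
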